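(* Let $\nu,k$ satisfy the structural assumptions in the context and let $\Omega\subset\mathbb{R}^3$ be a bounded $C^2$ domain whose boundary has positive Gaussian curvature. For every $h\in L^2(\Omega\times\mathbb{R}^3)$, $$\|S_\Omega Kh\|_{L^2(\Omega\times\mathbb{R}^3)}\lesssim \operatorname{diam}(\Omega)^{1/2}\|h\|_{L^2(\Omega\times\mathbb{R}^3)}.$$
   Context: Structural assumptions: $\nu:\mathbb{R}^3\to(0,\infty)$ and $k:\mathbb{R}^3\times\mathbb{R}^3\to\mathbb{R}$ satisfy, for some $\rho\in(0,1)$, $\gamma\in[0,1]$, $\nu_0,\nu_1,C>0$: $k(v,v^* )=k(v^*,v)$; $\nu_0(1+|v|)^\gamma\le\nu(v)\le\nu_1(1+|v|)^\gamma$; $|k(v,v^* )|\le \frac{C}{|v-v^*|(1+|v|+|v^*|)^{1-\gamma}}e^{-\frac{1-\rho}{4}(|v-v^*|^2+(\frac{|v|^2-|v^*|^2}{|v-v^*|})^2)}$; $|\nabla_v k(v,v^* )|\le \frac{C(1+|v|)}{|v-v^*|^2(1+|v|+|v^*|)^{1-\gamma}}e^{-\frac{1-\rho}{4}(|v-v^*|^2+(\frac{|v|^2-|v^*|^2}{|v-v^*|})^2)}$; $|\nabla_v\nu(v)|\le C(1+|v|)^{\gamma-1}$. $Kh(x,v)=\int_{\mathbb{R}^3}k(v,v^* )h(x,v^* )dv^*$. $\tau_{x,v}=\inf\{s>0:x-sv\in\Omega^c\}$ and $S_\Omega h(x,v)=\int_0^{\tau_{x,v}}e^{-\nu(v)s}h(x-sv,v)\,ds$.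 $A\lesssim B$ means $A\le cB$ with a constant $c>0$ depending only on $\nu,k$ (not on $\Omega$ or $h$). *)

theory Defs
  imports "HOL-Analysis.Analysis"
begin

type_synonym R3 = "real^3"

definition structural_assms ::
  "(R3 \<Rightarrow> real) \<Rightarrow> (R3 \<Rightarrow> R3 \<Rightarrow> real) \<Rightarrow> real \<Rightarrow> real \<Rightarrow> real \<Rightarrow> real \<Rightarrow> real \<Rightarrow> bool" where
  "structural_assms \<nu> k \<rho> \<gamma> \<nu>0 \<nu>1 C \<longleftrightarrow>
     0 < \<rho> \<and> \<rho> < 1 \<and> 0 \<le> \<gamma> \<and> \<gamma> \<le> 1 \<and> 0 < \<nu>0 \<and> 0 < \<nu>1 \<and> 0 < C \<and>
     (\<forall>v. 0 < \<nu> v) \<and>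
     (\<forall>v w. k v w = k w v) \<and>
     (\<forall>v. \<nu>0 * (1 + norm v) powr \<gamma> \<le> \<nu> v \<and> \<nu> v \<le> \<nu>1 * (1 + norm v) powr \<gamma>) \<and>
     (\<forall>v w. v \<noteq> w \<longrightarrow>
        \<bar>k v w\<bar> \<le> C / (norm (v - w) * (1 + norm v + norm w) powr (1 - \<gamma>)) *
          exp (- ((1 - \<rho>) / 4) * ((norm (v - w))\<^sup>2 + ((((norm v)\<^sup>2 - (norm w)\<^sup>2) / norm (v - w)))\<^sup>2))) \<and>
     (\<forall>v w. v \<noteq> w \<longrightarrow> (\<exists>g. ((\<lambda>u. k u w) has_derivative (\<lambda>z. g \<bullet> z)) (at v) \<and>
        norm g \<le> C * (1 + norm v) / ((norm (v - w))\<^sup>2 * (1 + norm v + norm w) powr (1 - \<gamma>)) *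
          exp (- ((1 - \<rho>) / 4) * ((norm (v - w))\<^sup>2 + ((((norm v)\<^sup>2 - (norm w)\<^sup>2) / norm (v - w)))\<^sup>2)))) \<and>
     (\<forall>v. \<exists>g. (\<nu> has_derivative (\<lambda>z. g \<bullet> z)) (at v) \<and> norm g \<le> C * (1 + norm v) powr (\<gamma> - 1))"

definition C2_defining_function :: "R3 set \<Rightarrow> (R3 \<Rightarrow> real) \<Rightarrow> (R3 \<Rightarrow> R3) \<Rightarrow> (R3 \<Rightarrow> real^3^3) \<Rightarrow> bool" where
  "C2_defining_function \<Omega> \<xi> gr H \<longleftrightarrow>
     (\<forall>x. (\<xi> has_derivative (\<lambda>z. gr x \<bullet> z)) (at x)) \<and>
     (\<forall>x. (gr has_derivative (\<lambda>z. H x *v z)) (at x)) \<and>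
     continuous_on UNIV H \<and>
     \<Omega> = {x. \<xi> x < 0} \<and> frontier \<Omega> = {x. \<xi> x = 0} \<and>
     (\<forall>x\<in>frontier \<Omega>. gr x \<noteq> 0)"

text \<open>Gaussian curvature of the level surface {xi = 0} at x: the determinant of the second
  fundamental form in an orthonormal basis (e1,e2) of the tangent plane, divided by |grad xi|^2.\<close>
definition gauss_curv :: "(R3 \<Rightarrow> R3) \<Rightarrow> (R3 \<Rightarrow> real^3^3) \<Rightarrow> R3 \<Rightarrow> R3 \<Rightarrow> R3 \<Rightarrow> real" where
  "gauss_curv gr H x e1 e2 =
     ((e1 \<bullet> (H x *v e1)) * (e2 \<bullet> (H x *v e2)) - (e1 \<bullet> (H x *v e2)) * (e2 \<bullet> (H x *v e1)))
       / (norm (gr x))\<^sup>2"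

definition bounded_C2_domain_pos_gauss_curv :: "R3 set \<Rightarrow> bool" where
  "bounded_C2_domain_pos_gauss_curv \<Omega> \<longleftrightarrow>
     open \<Omega> \<and> connected \<Omega> \<and> bounded \<Omega> \<and> \<Omega> \<noteq> {} \<and>
     (\<exists>\<xi> gr H. C2_defining_function \<Omega> \<xi> gr H \<and>
        (\<forall>x\<in>frontier \<Omega>. \<forall>e1 e2. norm e1 = 1 \<and> norm e2 = 1 \<and> e1 \<bullet> e2 = 0 \<and>
            e1 \<bullet> gr x = 0 \<and> e2 \<bullet> gr x = 0 \<longrightarrow> gauss_curv gr H x e1 e2 > 0))"

definition Kop :: "(R3 \<Rightarrow> R3 \<Rightarrow> real) \<Rightarrow> (R3 \<Rightarrow> R3 \<Rightarrow> real) \<Rightarrow> R3 \<Rightarrow> R3 \<Rightarrow> real" where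
  "Kop k h x v = (\<integral>w. k v w * h x w \<partial>lebesgue)"

definition exit_time :: "R3 set \<Rightarrow> R3 \<Rightarrow> R3 \<Rightarrow> ereal" where
  "exit_time \<Omega> x v = Inf (ereal ` {s. 0 < s \<and> x - s *\<^sub>R v \<notin> \<Omega>})"

definition S_op :: "R3 set \<Rightarrow> (R3 \<Rightarrow> real) \<Rightarrow> (R3 \<Rightarrow> R3 \<Rightarrow> real) \<Rightarrow> R3 \<Rightarrow> R3 \<Rightarrow> real" where
  "S_op \<Omega> \<nu> f x v =
     (LINT s:{s. 0 < s \<and> ereal s < exit_time \<Omega> x v}|lebesgue. exp (- \<nu> v * s) * f (x - s *\<^sub>R v) v)"

definition L2_on :: "R3 set \<Rightarrow> (R3 \<Rightarrow> R3 \<Rightarrow> real) \<Rightarrow> bool" where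
  "L2_on \<Omega> h \<longleftrightarrow> (\<lambda>(x,v). h x v) \<in> borel_measurable (lebesgue_on (\<Omega> \<times> UNIV)) \<and>
     integrable (lebesgue_on (\<Omega> \<times> UNIV)) (\<lambda>(x,v). (h x v)\<^sup>2)"

definition L2_norm_on :: "R3 set \<Rightarrow> (R3 \<Rightarrow> R3 \<Rightarrow> real) \<Rightarrow> real" where
  "L2_norm_on \<Omega> h = sqrt (\<integral>p. (case p of (x,v) \<Rightarrow> (h x v)\<^sup>2) \<partial>lebesgue_on (\<Omega> \<times> UNIV))"

end

theory Submission
  imports Defs
begin

(* By the structural bound, |k(v,w)| <= C g1(v - w), where gn(z) = exp(-a |z|^2) / |z|^n and
   a = (1 - rho)/4; in R^3 both g1 and g2 are integrable. Cauchy-Schwarz in w gives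
   |Kh(y,v)|^2 <= C |g1|_1 int C g1(v - w) h(y,w)^2 dw. Along the backward characteristic through
   (x,v), S integrates against exp(-nu(v) s), nu >= nu0, over a time interval of length at most
   diam(Omega)/|v|, so Cauchy-Schwarz in s and a translation in x give
   int_Omega |Sf(x,v)|^2 dx <= diam(Omega)/(nu0 |v|) int_Omega f(y,v)^2 dy.
   The factor 1/|v| is absorbed by integrating in v first, since g1(v - w)/|v| <= g2(v) + g2(v - w). As h is merely Lebesgue measurable, the estimate
   is proved for a Borel representative of h; this changes Kh only at positions in a null set, which
   almost no characteristic meets in a set of times of positive measure. *)

lemma measurable_pair_lborel_eq:
  "measurable (M \<Otimes>\<^sub>M lborel) N = measurable (M \<Otimes>\<^sub>M borel) N"
  "measurable (lborel \<Otimes>\<^sub>M M) N = measurable (borel \<Otimes>\<^sub>M M) N"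
  by (intro measurable_cong_sets sets_pair_measure_cong; simp)+

lemma ennreal_le_suminf: "(f i :: ennreal) \<le> (\<Sum>n. f n)"
  using sum_le_suminf[OF summableI, of "{i}" f] by simp

lemma nn_integral_lborel_translate:
  fixes f :: "'a::euclidean_space \<Rightarrow> ennreal"
  assumes [measurable]: "f \<in> borel_measurable borel"
  shows "(\<integral>\<^sup>+v. f (v - w) \<partial>lborel) = (\<integral>\<^sup>+v. f v \<partial>lborel)"
proof -
  have "(\<integral>\<^sup>+v. f v \<partial>lborel) = (\<integral>\<^sup>+v. f v \<partial>distr lborel borel ((+) (- w)))"
    by (simp add: lborel_distr_plus)
  also have "\<dots> = (\<integral>\<^sup>+v. f (- w + v) \<partial>lborel)"
    by (subst nn_integral_distr) auto
  finally show ?thesis by simp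
qed

lemma nn_integral_lborel_pair:
  fixes f :: "'a::euclidean_space \<times> 'b::euclidean_space \<Rightarrow> ennreal"
  assumes "f \<in> borel_measurable borel"
  shows "(\<integral>\<^sup>+p. f p \<partial>lborel) = (\<integral>\<^sup>+x. \<integral>\<^sup>+y. f (x, y) \<partial>lborel \<partial>lborel)"
    and "(\<integral>\<^sup>+p. f p \<partial>lborel) = (\<integral>\<^sup>+y. \<integral>\<^sup>+x. f (x, y) \<partial>lborel \<partial>lborel)"
proof -
  have f: "f \<in> borel_measurable (lborel \<Otimes>\<^sub>M lborel)"
    using assms by (simp add: borel_prod[symmetric] measurable_pair_lborel_eq)
  show 1: "(\<integral>\<^sup>+p. f p \<partial>lborel) = (\<integral>\<^sup>+x. \<integral>\<^sup>+y. f (x, y) \<partial>lborel \<partial>lborel)"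
    using lborel.nn_integral_fst[OF f] by (simp add: lborel_prod)
  show "(\<integral>\<^sup>+p. f p \<partial>lborel) = (\<integral>\<^sup>+y. \<integral>\<^sup>+x. f (x, y) \<partial>lborel \<partial>lborel)"
    unfolding 1 using f by (rule lborel_pair.Fubini[symmetric])
qed

lemma nn_integral_exp_neg_halfline:
  assumes "0 < (c::real)"
  shows "(\<integral>\<^sup>+s. ennreal (exp (- c * s)) * indicator {0..} s \<partial>lborel) = ennreal (1 / c)"
  using nn_integral_has_integral_lebesgue'[OF _ has_integral_exp_minus_to_infinity[OF assms, of 0]]
  by simp

lemma ennreal_abs_integral_le_nn_integral:
  fixes f :: "'a \<Rightarrow> real"
  shows "ennreal \<bar>integral\<^sup>L M f\<bar> \<le> (\<integral>\<^sup>+x. ennreal \<bar>f x\<bar> \<partial>M)"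
  using integral_norm_bound_ennreal[of M f] by (cases "integrable M f") (simp_all add: not_integrable_integral_eq)

lemma ennreal_square_integral_le:
  fixes f g h :: "'a \<Rightarrow> real"
  assumes [measurable]: "g \<in> borel_measurable M" "h \<in> borel_measurable M"
    and fg: "\<And>x. \<bar>f x\<bar> \<le> g x"
  shows "ennreal ((\<integral>x. f x * h x \<partial>M)\<^sup>2) \<le> (\<integral>\<^sup>+x. ennreal (g x) \<partial>M) * (\<integral>\<^sup>+x. ennreal (g x * (h x)\<^sup>2) \<partial>M)"
proof -
  have g: "0 \<le> g x" for x using fg[of x] by linarith
  have "ennreal ((\<integral>x. f x * h x \<partial>M)\<^sup>2) = (ennreal \<bar>\<integral>x. f x * h x \<partial>M\<bar>)\<^sup>2"
    by (simp add: ennreal_power)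
  also have "\<dots> \<le> (\<integral>\<^sup>+x. ennreal (sqrt (g x)) * ennreal (sqrt (g x) * \<bar>h x\<bar>) \<partial>M)\<^sup>2"
  proof (intro power_mono)
    have "ennreal \<bar>\<integral>x. f x * h x \<partial>M\<bar> \<le> (\<integral>\<^sup>+x. ennreal \<bar>f x * h x\<bar> \<partial>M)"
      by (rule ennreal_abs_integral_le_nn_integral)
    also have "\<dots> \<le> (\<integral>\<^sup>+x. ennreal (sqrt (g x)) * ennreal (sqrt (g x) * \<bar>h x\<bar>) \<partial>M)"
    proof (intro nn_integral_mono)
      fix x
      have "\<bar>f x * h x\<bar> \<le> sqrt (g x) * (sqrt (g x) * \<bar>h x\<bar>)"
        using fg[of x] g[of x] by (simp add: abs_mult mult_right_mono flip: mult.assoc)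
      then show "ennreal \<bar>f x * h x\<bar> \<le> ennreal (sqrt (g x)) * ennreal (sqrt (g x) * \<bar>h x\<bar>)"
        by (simp add: ennreal_leI g flip: ennreal_mult')
    qed
    finally show "ennreal \<bar>\<integral>x. f x * h x \<partial>M\<bar> \<le> \<dots>" .
  qed simp
  also have "\<dots> \<le> (\<integral>\<^sup>+x. ennreal (sqrt (g x)) ^ 2 \<partial>M) * (\<integral>\<^sup>+x. ennreal (sqrt (g x) * \<bar>h x\<bar>) ^ 2 \<partial>M)"
    by (rule Cauchy_Schwarz_nn_integral) measurable
  also have "\<dots> = (\<integral>\<^sup>+x. ennreal (g x) \<partial>M) * (\<integral>\<^sup>+x. ennreal (g x * (h x)\<^sup>2) \<partial>M)"
    using g by (simp add: ennreal_power power_mult_distrib)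
  finally show ?thesis .
qed

lemma integrable_square_of_nn_integral_le:
  fixes f :: "'a \<Rightarrow> real"
  assumes f: "f \<in> borel_measurable M" and le: "(\<integral>\<^sup>+x. ennreal ((f x)\<^sup>2) \<partial>M) \<le> ennreal B" and B: "0 \<le> B"
  shows "integrable M (\<lambda>x. (f x)\<^sup>2)" "(\<integral>x. (f x)\<^sup>2 \<partial>M) \<le> B"
proof -
  show "integrable M (\<lambda>x. (f x)\<^sup>2)"
    using f le by (intro integrableI_bounded) (auto simp: top.not_eq_extremum intro: le_less_trans)
  have "(\<integral>x. (f x)\<^sup>2 \<partial>M) = enn2real (\<integral>\<^sup>+x. ennreal ((f x)\<^sup>2) \<partial>M)"
    using f by (intro integral_eq_nn_integral) auto
  also have "\<dots> \<le> B"
    using le B by (simp add: enn2real_leI)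
  finally show "(\<integral>x. (f x)\<^sup>2 \<partial>M) \<le> B" .
qed

lemma borel_measurable_completion_AE:
  fixes f g :: "'a \<Rightarrow> real"
  assumes f: "f \<in> borel_measurable M" and ae: "AE x in M. f x = g x"
  shows "g \<in> borel_measurable (completion M)"
proof (rule borel_measurableI)
  obtain N where N: "N \<in> null_sets M" "{x \<in> space M. f x \<noteq> g x} \<subseteq> N"
    using ae by (auto elim!: AE_E)
  fix S :: "real set" assume "open S"
  then have "f -` S \<inter> space M \<in> sets M" using f by (simp add: borel_measurable_vimage_open)
  then have "(f -` S \<inter> space M) - N \<in> sets (completion M)" using N by auto
  moreover have "(g -` S \<inter> space M) \<inter> N \<in> sets (completion M)"
    by (rule sets_completionI_sub[OF N(1)]) auto
  moreover have "g -` S \<inter> space (completion M) = ((f -` S \<inter> space M) - N) \<union> ((g -` S \<inter> space M) \<inter> N)"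
    using N by auto
  ultimately show "g -` S \<inter> space (completion M) \<in> sets (completion M)"
    by (metis sets.Un)
qed

lemma integral_lebesgue_eq_lborel_AE:
  fixes f g :: "'a::euclidean_space \<Rightarrow> real"
  assumes g: "g \<in> borel_measurable borel" and ae: "AE x in lborel. g x = f x"
  shows "integral\<^sup>L lebesgue f = integral\<^sup>L lborel g"
proof -
  have "f \<in> borel_measurable lebesgue"
    using g ae by (intro borel_measurable_completion_AE[of g]) simp_all
  then have "integral\<^sup>L lebesgue f = integral\<^sup>L lebesgue g"
    using g ae by (intro integral_cong_AE) (auto intro: AE_completion measurable_completion)
  also have "\<dots> = integral\<^sup>L lborel g" using g by (intro integral_completion) simp
  finally show ?thesis .
qed

lemma lebesgue_on_ex_borel_representative:
  fixes H :: "'a::euclidean_space \<Rightarrow> real"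
  assumes S: "S \<in> sets borel" and H: "H \<in> borel_measurable (lebesgue_on S)"
  obtains h where "h \<in> borel_measurable borel" "\<And>p. p \<notin> S \<Longrightarrow> h p = 0"
    "AE p in lborel. p \<in> S \<longrightarrow> H p = h p"
proof -
  have "(\<lambda>p. indicator S p *\<^sub>R H p) \<in> borel_measurable lebesgue"
    using borel_measurable_restrict_space_iff[of S lebesgue H] H S by simp
  then obtain g where g: "g \<in> borel_measurable lborel" "AE p in lborel. indicator S p *\<^sub>R H p = g p"
    using completion_ex_borel_measurable_real by blast
  show ?thesis
  proof
    show "(\<lambda>p. indicator S p * g p) \<in> borel_measurable borel" using g(1) S by simp
    show "AE p in lborel. p \<in> S \<longrightarrow> H p = indicator S p * g p"
      using g(2) by eventually_elim (auto simp: indicator_def)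
  qed simp
qed

lemma nn_integral_lebesgue_on_AE_eq:
  fixes G g :: "'a::euclidean_space \<Rightarrow> ennreal"
  assumes S: "S \<in> sets borel" and ae: "AE p in lborel. p \<in> S \<longrightarrow> G p = g p"
  shows "(\<integral>\<^sup>+p. G p \<partial>lebesgue_on S) = (\<integral>\<^sup>+p. indicator S p * g p \<partial>lborel)"
proof -
  have "(\<integral>\<^sup>+p. G p \<partial>lebesgue_on S) = (\<integral>\<^sup>+p. G p * indicator S p \<partial>lebesgue)"
    using S by (intro nn_integral_restrict_space) auto
  also have "\<dots> = (\<integral>\<^sup>+p. G p * indicator S p \<partial>lborel)"
    by (rule nn_integral_completion)
  also have "\<dots> = (\<integral>\<^sup>+p. indicator S p * g p \<partial>lborel)"
    using ae by (intro nn_integral_cong_AE) (auto simp: indicator_def elim: eventually_mono)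
  finally show ?thesis .
qed

lemma borel_measurable_lebesgue_on_AE_eq:
  fixes G g :: "'a::euclidean_space \<Rightarrow> real"
  assumes S: "S \<in> sets borel" and g: "g \<in> borel_measurable borel"
    and ae: "AE p in lborel. p \<in> S \<longrightarrow> G p = g p"
  shows "G \<in> borel_measurable (lebesgue_on S)"
proof -
  have "AE p in lborel. indicator S p * g p = indicator S p *\<^sub>R G p"
    using ae by eventually_elim (auto simp: indicator_def)
  then have "(\<lambda>p. indicator S p *\<^sub>R G p) \<in> borel_measurable lebesgue"
    using S g by (intro borel_measurable_completion_AE[where f = "\<lambda>p. indicator S p * g p"]) simp_all
  then show ?thesis using borel_measurable_restrict_space_iff[of S lebesgue G] S by simp
qed

lemma lebesgue_on_square_integral_le_AE:
  fixes G g H h :: "'a::euclidean_space \<Rightarrow> real"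
  assumes S: "S \<in> sets borel" and g: "g \<in> borel_measurable borel"
    and Gg: "AE p in lborel. p \<in> S \<longrightarrow> G p = g p"
    and H: "integrable (lebesgue_on S) (\<lambda>p. (H p)\<^sup>2)"
    and Hh: "AE p in lborel. p \<in> S \<longrightarrow> H p = h p" and h: "\<And>p. p \<notin> S \<Longrightarrow> h p = 0"
    and gh: "(\<integral>\<^sup>+p. ennreal ((g p)\<^sup>2) \<partial>lborel) \<le> ennreal K * (\<integral>\<^sup>+p. ennreal ((h p)\<^sup>2) \<partial>lborel)"
    and K: "0 \<le> K"
  shows "integrable (lebesgue_on S) (\<lambda>p. (G p)\<^sup>2)"
    and "(\<integral>p. (G p)\<^sup>2 \<partial>lebesgue_on S) \<le> K * (\<integral>p. (H p)\<^sup>2 \<partial>lebesgue_on S)"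
proof -
  define NH where "NH = (\<integral>p. (H p)\<^sup>2 \<partial>lebesgue_on S)"
  have NH: "0 \<le> NH" by (simp add: NH_def)
  have "(\<integral>\<^sup>+p. ennreal ((G p)\<^sup>2) \<partial>lebesgue_on S) = (\<integral>\<^sup>+p. indicator S p * ennreal ((g p)\<^sup>2) \<partial>lborel)"
    using Gg by (intro nn_integral_lebesgue_on_AE_eq S) (auto elim: eventually_mono)
  also have "\<dots> \<le> (\<integral>\<^sup>+p. ennreal ((g p)\<^sup>2) \<partial>lborel)"
    by (intro nn_integral_mono) (simp add: indicator_def)
  also have "\<dots> \<le> ennreal K * (\<integral>\<^sup>+p. ennreal ((h p)\<^sup>2) \<partial>lborel)"
    by (rule gh)
  also have "(\<integral>\<^sup>+p. ennreal ((h p)\<^sup>2) \<partial>lborel) = (\<integral>\<^sup>+p. indicator S p * ennreal ((h p)\<^sup>2) \<partial>lborel)"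
    using h by (intro nn_integral_cong) (auto simp: indicator_def)
  also have "\<dots> = (\<integral>\<^sup>+p. ennreal ((H p)\<^sup>2) \<partial>lebesgue_on S)"
    using Hh by (intro nn_integral_lebesgue_on_AE_eq[symmetric] S) (auto elim: eventually_mono)
  also have "\<dots> = ennreal NH"
    unfolding NH_def using H by (intro nn_integral_eq_integral) auto
  finally have "(\<integral>\<^sup>+p. ennreal ((G p)\<^sup>2) \<partial>lebesgue_on S) \<le> ennreal (K * NH)"
    using K NH by (simp add: ennreal_mult)
  then show "integrable (lebesgue_on S) (\<lambda>p. (G p)\<^sup>2)"
    and "(\<integral>p. (G p)\<^sup>2 \<partial>lebesgue_on S) \<le> K * NH"
    using integrable_square_of_nn_integral_le[OF borel_measurable_lebesgue_on_AE_eq[OF S g Gg]] K NH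
    by simp_all
qed

lemma AE_lborel_pair_fibers:
  fixes P :: "'a::euclidean_space \<times> 'b::euclidean_space \<Rightarrow> bool"
  assumes "AE p in lborel. P p"
  obtains N where "N \<in> null_sets lborel" "\<And>x. x \<notin> N \<Longrightarrow> AE w in lborel. P (x, w)"
proof -
  have "AE p in lborel \<Otimes>\<^sub>M lborel. P p" using assms by (subst lborel_prod)
  then have "AE x in lborel. AE w in lborel. P (x, w)" by (rule lborel_pair.AE_pair)
  then obtain N where "{x \<in> space lborel. \<not> (AE w in lborel. P (x, w))} \<subseteq> N" "N \<in> null_sets lborel"
    by (rule AE_E) blast
  then show ?thesis using that by auto
qed

lemma AE_lborel_line_not_in_null:
  fixes N :: "'a::euclidean_space set"
  assumes N: "N \<in> null_sets lborel"
  shows "AE p in (lborel :: ('a \<times> 'a) measure). AE s in lborel. fst p - s *\<^sub>R snd p \<notin> N"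
proof -
  have [measurable]: "N \<in> sets borel" using N by auto
  define Q :: "(('a \<times> 'a) \<times> real) set" where "Q = {q. fst (fst q) - snd q *\<^sub>R snd (fst q) \<in> N}"
  have lborel_pair_sets: "sets ((lborel :: ('a \<times> 'a) measure) \<Otimes>\<^sub>M lborel) = sets ((borel \<Otimes>\<^sub>M borel) \<Otimes>\<^sub>M borel)"
    by (intro sets_pair_measure_cong) (simp_all only: borel_prod sets_lborel)
  have "Measurable.pred ((borel \<Otimes>\<^sub>M borel) \<Otimes>\<^sub>M borel) (\<lambda>q. fst (fst q) - snd q *\<^sub>R snd (fst q) \<in> N)"
    by measurable
  then have Q: "Q \<in> sets (lborel \<Otimes>\<^sub>M lborel)"
    unfolding lborel_pair_sets by (simp add: Q_def pred_def space_pair_measure case_prod_beta)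
  have "emeasure lborel ((\<lambda>p. (p, s)) -` Q) = 0" for s
  proof -
    have "Measurable.pred (borel \<Otimes>\<^sub>M borel) (\<lambda>p. fst p - s *\<^sub>R snd p \<in> N)"
      by measurable
    then have Qs: "(\<lambda>p. (p, s)) -` Q \<in> sets (lborel \<Otimes>\<^sub>M lborel)"
      by (simp add: Q_def pred_def space_pair_measure case_prod_beta vimage_def
          sets_pair_measure_cong[OF sets_lborel sets_lborel])
    have "emeasure lborel ((\<lambda>p. (p, s)) -` Q) = emeasure (lborel \<Otimes>\<^sub>M lborel) ((\<lambda>p. (p, s)) -` Q)"
      by (simp add: lborel_prod)
    also have "\<dots> = (\<integral>\<^sup>+v. emeasure lborel ((\<lambda>x. (x, v)) -` (\<lambda>p. (p, s)) -` Q) \<partial>lborel)"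
      by (rule lborel_pair.emeasure_pair_measure_alt2[OF Qs])
    also have "\<dots> = 0"
    proof -
      have "emeasure lborel {x. x - s *\<^sub>R v \<in> N} = 0" for v
        using null_sets_translation[OF N, of "s *\<^sub>R v"] by auto
      then show ?thesis by (simp add: Q_def vimage_def)
    qed
    finally show ?thesis .
  qed
  then have "emeasure (lborel \<Otimes>\<^sub>M lborel) Q = 0"
    by (simp add: lborel_pair.emeasure_pair_measure_alt2[OF Q])
  then have "AE q in lborel \<Otimes>\<^sub>M lborel. q \<notin> Q"
    using Q by (intro AE_not_in) auto
  then have "AE p in lborel. AE s in lborel. (p, s) \<notin> Q" by (rule lborel_pair.AE_pair)
  then show ?thesis by (simp add: Q_def case_prod_beta)
qed

section \<open>Integrability of singular Gaussians in R^3\<close>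

lemma emeasure_lborel_cball_R3:
  "0 \<le> r \<Longrightarrow> emeasure lborel (cball (0::R3) r) = ennreal (unit_ball_vol 3 * r^3)"
  using emeasure_cball[of r "0::R3"] by simp

lemma ex_dyadic_bracket:
  fixes r :: real
  assumes "1 \<le> r"
  shows "\<exists>n. 2^n \<le> r \<and> r < 2^Suc n"
proof -
  define n where "n = nat \<lfloor>log 2 r\<rfloor>"
  have "0 \<le> log 2 r" using assms by simp
  then have n: "real n \<le> log 2 r" "log 2 r < real n + 1"
    unfolding n_def by linarith+
  have "2^n \<le> r" using n(1) assms le_log_iff[of 2 r "real n"] by (simp add: powr_realpow)
  moreover have "r < 2^Suc n" using n(2) assms log_less_iff[of 2 r "real n + 1"]
    by (simp add: powr_realpow[symmetric] powr_add)
  ultimately show ?thesis by blast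
qed

definition radial_majorant :: "R3 \<Rightarrow> real" where
  "radial_majorant z = (if norm z < 1 then 1 / (norm z)^2 else 1 / (norm z)^4)"

lemma radial_majorant_nonneg: "0 \<le> radial_majorant z"
  by (simp add: radial_majorant_def)

lemma radial_majorant_le_dyadic_sums:
  "ennreal (radial_majorant z) \<le> (\<Sum>n. ennreal (4^Suc n) * indicator (cball 0 ((1/2)^n)) z)
     + (\<Sum>n. ennreal ((1/16)^n) * indicator (cball 0 (2^Suc n)) z)"
proof (cases "z = 0")
  case True
  then show ?thesis by (simp add: radial_majorant_def)
next
  case False
  define r where "r = norm z"
  have r: "0 < r" using False by (simp add: r_def)
  show ?thesis
  proof (cases "r < 1")
    case True
    obtain n where n: "2^n \<le> 1 / r" "1 / r < 2^Suc n"
      using ex_dyadic_bracket[of "1 / r"] r True by auto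
    have "radial_majorant z = (1 / r)^2" using True by (simp add: radial_majorant_def r_def power_one_over)
    also have "\<dots> \<le> (2^Suc n)^2" using n r by (intro power_mono) auto
    also have "\<dots> = 4^Suc n" by (simp add: power2_eq_square flip: power_mult_distrib)
    finally have "ennreal (radial_majorant z) \<le> ennreal (4^Suc n) * indicator (cball 0 ((1/2)^n)) z"
      using n r by (simp add: r_def indicator_def ennreal_leI field_simps power_one_over)
    also have "\<dots> \<le> (\<Sum>n. ennreal (4^Suc n) * indicator (cball 0 ((1/2)^n)) z)"
      by (rule ennreal_le_suminf)
    finally show ?thesis by (rule order_trans) (rule add_increasing2, auto)
  next
    case False
    obtain n where n: "2^n \<le> r" "r < 2^Suc n"
      using ex_dyadic_bracket[of r] False by auto
    have "radial_majorant z = 1 / r^4" using False by (simp add: radial_majorant_def r_def)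
    also have "\<dots> \<le> 1 / (2^n)^4" using n r by (intro divide_left_mono power_mono) auto
    also have "\<dots> = 1 / (2^4)^n" by (simp only: power_mult[symmetric] mult.commute)
    also have "\<dots> = (1/16)^n" by (simp add: power_one_over)
    finally have "ennreal (radial_majorant z) \<le> ennreal ((1/16)^n) * indicator (cball 0 (2^Suc n)) z"
      using n by (simp add: r_def indicator_def ennreal_leI)
    also have "\<dots> \<le> (\<Sum>n. ennreal ((1/16)^n) * indicator (cball 0 (2^Suc n)) z)"
      by (rule ennreal_le_suminf)
    finally show ?thesis by (rule order_trans) (rule add_increasing, auto)
  qed
qed

lemma nn_integral_radial_majorant_finite: "(\<integral>\<^sup>+z. ennreal (radial_majorant z) \<partial>lborel) < \<infinity>"
proof -
  define V where "V = unit_ball_vol 3"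
  have V: "0 \<le> V" by (simp add: V_def)
  have [measurable]: "cball (0::R3) r \<in> sets borel" for r
    by simp
  have near: "ennreal (4^Suc n) * emeasure lborel (cball (0::R3) ((1/2)^n)) = ennreal (4 * V * (1/2)^n)"
    for n
  proof -
    have "(4::real)^Suc n * ((1/2)^n)^3 = 4 * (1/2)^n"
      by (induction n) (simp_all add: power_mult_distrib power_divide)
    then have "(4::real)^Suc n * (V * ((1/2)^n)^3) = 4 * V * (1/2)^n"
      by (metis mult.assoc mult.commute)
    then show ?thesis by (simp add: emeasure_lborel_cball_R3 V_def flip: ennreal_mult)
  qed
  have far: "ennreal ((1/16)^n) * emeasure lborel (cball (0::R3) (2^Suc n)) = ennreal (8 * V * (1/2)^n)"
    for n
  proof -
    have "(1/16::real)^n * (2^Suc n)^3 = 8 * (1/2)^n"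
      by (induction n) (simp_all add: power_mult_distrib power_divide)
    then have "(1/16::real)^n * (V * (2^Suc n)^3) = 8 * V * (1/2)^n"
      by (metis mult.assoc mult.commute)
    then show ?thesis by (simp add: emeasure_lborel_cball_R3 V_def flip: ennreal_mult)
  qed
  have "(\<integral>\<^sup>+z. ennreal (radial_majorant z) \<partial>lborel)
      \<le> (\<integral>\<^sup>+z. (\<Sum>n. ennreal (4^Suc n) * indicator (cball 0 ((1/2)^n)) z)
          + (\<Sum>n. ennreal ((1/16)^n) * indicator (cball (0::R3) (2^Suc n)) z) \<partial>lborel)"
    by (intro nn_integral_mono radial_majorant_le_dyadic_sums)
  also have "\<dots> = (\<Sum>n. ennreal (4^Suc n) * emeasure lborel (cball (0::R3) ((1/2)^n)))
      + (\<Sum>n. ennreal ((1/16)^n) * emeasure lborel (cball (0::R3) (2^Suc n)))"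
    by (subst nn_integral_add, measurable, measurable) (simp add: nn_integral_suminf nn_integral_cmult_indicator)
  also have "\<dots> = (\<Sum>n. ennreal (4 * V * (1/2)^n)) + (\<Sum>n. ennreal (8 * V * (1/2)^n))"
    by (simp only: near far)
  also have "\<dots> < \<infinity>"
    by (subst suminf_ennreal2, simp add: V, intro summable_mult summable_geometric, simp)+ simp
  finally show ?thesis .
qed

definition singular_gaussian :: "real \<Rightarrow> nat \<Rightarrow> R3 \<Rightarrow> real" where
  "singular_gaussian a n z = exp (- a * (norm z)^2) / norm z ^ n"

lemma singular_gaussian_nonneg: "0 \<le> singular_gaussian a n z"
  by (simp add: singular_gaussian_def)

lemma borel_measurable_singular_gaussian [measurable]: "singular_gaussian a n \<in> borel_measurable borel"
  unfolding singular_gaussian_def by measurable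

lemma exp_neg_le_four_div_square:
  fixes x :: real
  assumes "0 < x"
  shows "exp (- x) \<le> 4 / x^2"
proof -
  have "x / 2 \<le> exp (x / 2)" using exp_ge_add_one_self[of "x / 2"] by linarith
  then have "(x / 2)^2 \<le> exp (x / 2)^2" using assms by (intro power_mono) auto
  also have "\<dots> = exp x" by (simp flip: exp_of_nat_mult)
  finally show ?thesis using assms by (simp add: exp_minus power_divide field_simps)
qed

lemma singular_gaussian_le_radial_majorant:
  assumes a: "0 < a" and n: "1 \<le> n" "n \<le> 2"
  shows "singular_gaussian a n z \<le> max 1 (4 / a^2) * radial_majorant z"
proof (cases "norm z < 1")
  case True
  show ?thesis
  proof (cases "z = 0")
    case False
    have "singular_gaussian a n z \<le> 1 / norm z ^ n"
      unfolding singular_gaussian_def using a by (intro divide_right_mono) auto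
    also have "\<dots> \<le> 1 / (norm z)^2"
      using True False n by (intro divide_left_mono power_decreasing) auto
    also have "\<dots> \<le> max 1 (4 / a^2) * radial_majorant z"
      using True by (simp add: radial_majorant_def divide_right_mono)
    finally show ?thesis .
  qed (use n in \<open>simp add: singular_gaussian_def radial_majorant_def power_0_left\<close>)
next
  case False
  have "singular_gaussian a n z \<le> exp (- (a * (norm z)^2))"
    unfolding singular_gaussian_def using False n
    by (simp add: divide_le_eq one_le_power mult.commute[of "exp _"] mult_le_cancel_left1)
  also have "\<dots> \<le> 4 / (a * (norm z)^2)^2"
    using False a by (intro exp_neg_le_four_div_square mult_pos_pos) auto
  also have "\<dots> = 4 / a^2 * radial_majorant z"
    using False by (simp add: radial_majorant_def power_mult_distrib flip: power_mult)
  also have "\<dots> \<le> max 1 (4 / a^2) * radial_majorant z"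
    by (intro mult_right_mono radial_majorant_nonneg) auto
  finally show ?thesis .
qed

lemma nn_integral_singular_gaussian_finite:
  assumes "0 < a" "1 \<le> n" "n \<le> 2"
  shows "(\<integral>\<^sup>+z. ennreal (singular_gaussian a n z) \<partial>lborel) < \<infinity>"
proof -
  define B where "B = max 1 (4 / a^2)"
  have "(\<integral>\<^sup>+z. ennreal (singular_gaussian a n z) \<partial>lborel)
      \<le> (\<integral>\<^sup>+z. ennreal B * ennreal (radial_majorant z) \<partial>lborel)"
    using singular_gaussian_le_radial_majorant[OF assms]
    by (intro nn_integral_mono) (simp add: B_def ennreal_leI radial_majorant_nonneg flip: ennreal_mult'')
  also have "\<dots> = ennreal B * (\<integral>\<^sup>+z. ennreal (radial_majorant z) \<partial>lborel)"
    by (rule nn_integral_cmult) (simp add: radial_majorant_def)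
  also have "\<dots> < \<infinity>"
    using nn_integral_radial_majorant_finite by (simp add: ennreal_mult_less_top)
  finally show ?thesis .
qed

lemma singular_gaussian_div_norm_le:
  assumes a: "0 \<le> a"
  shows "singular_gaussian a 1 (v - w) / norm v \<le> singular_gaussian a 2 v + singular_gaussian a 2 (v - w)"
proof (cases "v = 0 \<or> v = w")
  case True
  then show ?thesis by (auto simp: singular_gaussian_def)
next
  case False
  then have v: "0 < norm v" and vw: "0 < norm (v - w)" by auto
  have eq: "singular_gaussian a 1 (v - w) / norm v = exp (- a * (norm (v - w))^2) / (norm v * norm (v - w))"
    by (simp add: singular_gaussian_def)
  show ?thesis
  proof (cases "norm v \<le> norm (v - w)")
    case True
    note eq
    also have "exp (- a * (norm (v - w))^2) / (norm v * norm (v - w)) \<le> exp (- a * (norm v)^2) / (norm v)^2"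
      using True v a by (intro frac_le mult_left_mono) (auto simp: power2_eq_square mult_mono)
    also have "\<dots> = singular_gaussian a 2 v" by (simp add: singular_gaussian_def)
    finally show ?thesis using singular_gaussian_nonneg[of a 2 "v - w"] by linarith
  next
    case False
    note eq
    also have "exp (- a * (norm (v - w))^2) / (norm v * norm (v - w)) \<le> exp (- a * (norm (v - w))^2) / (norm (v - w))^2"
      using False v vw by (intro divide_left_mono) (auto simp: power2_eq_square)
    also have "\<dots> = singular_gaussian a 2 (v - w)" by (simp add: singular_gaussian_def)
    finally show ?thesis using singular_gaussian_nonneg[of a 2 v] by linarith
  qed
qed

lemma nn_integral_singular_gaussian_div_norm_le:
  assumes "0 \<le> a"
  shows "(\<integral>\<^sup>+v. ennreal (singular_gaussian a 1 (v - w) / norm v) \<partial>lborel)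
    \<le> 2 * (\<integral>\<^sup>+z. ennreal (singular_gaussian a 2 z) \<partial>lborel)"
proof -
  have "(\<integral>\<^sup>+v. ennreal (singular_gaussian a 1 (v - w) / norm v) \<partial>lborel)
      \<le> (\<integral>\<^sup>+v. ennreal (singular_gaussian a 2 v) + ennreal (singular_gaussian a 2 (v - w)) \<partial>lborel)"
    using singular_gaussian_div_norm_le[OF assms]
    by (intro nn_integral_mono) (simp add: singular_gaussian_nonneg flip: ennreal_plus)
  also have "\<dots> = (\<integral>\<^sup>+v. ennreal (singular_gaussian a 2 v) \<partial>lborel)
      + (\<integral>\<^sup>+v. ennreal (singular_gaussian a 2 (v - w)) \<partial>lborel)"
    by (rule nn_integral_add) auto
  also have "(\<integral>\<^sup>+v. ennreal (singular_gaussian a 2 (v - w)) \<partial>lborel)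
      = (\<integral>\<^sup>+v. ennreal (singular_gaussian a 2 v) \<partial>lborel)"
    by (rule nn_integral_lborel_translate[where f = "\<lambda>z. ennreal (singular_gaussian a 2 z)"]) measurable
  finally show ?thesis by (simp add: mult_2)
qed

section \<open>Consequences of the structural assumptions\<close>

lemma structural_assms_nu_ge:
  assumes "structural_assms \<nu> k \<rho> \<gamma> \<nu>0 \<nu>1 C"
  shows "\<nu>0 \<le> \<nu> v"
proof -
  have "\<nu>0 * 1 \<le> \<nu>0 * (1 + norm v) powr \<gamma>"
    using assms unfolding structural_assms_def by (intro mult_left_mono ge_one_powr_ge_zero) auto
  also have "\<dots> \<le> \<nu> v" using assms unfolding structural_assms_def by blast
  finally show ?thesis by simp
qed

lemma structural_assms_nu_borel:
  assumes "structural_assms \<nu> k \<rho> \<gamma> \<nu>0 \<nu>1 C"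
  shows "\<nu> \<in> borel_measurable borel"
proof -
  have "isCont \<nu> v" for v
    using assms has_derivative_continuous unfolding structural_assms_def by blast
  then show ?thesis by (intro borel_measurable_continuous_onI continuous_at_imp_continuous_on) auto
qed

lemma structural_assms_kernel_bound:
  assumes sa: "structural_assms \<nu> k \<rho> \<gamma> \<nu>0 \<nu>1 C" and "v \<noteq> w"
  shows "\<bar>k v w\<bar> \<le> C * singular_gaussian ((1 - \<rho>) / 4) 1 (v - w)"
proof -
  let ?a = "(1 - \<rho>) / 4" and ?n = "norm (v - w)"
  let ?P = "(1 + norm v + norm w) powr (1 - \<gamma>)"
  let ?Y = "(((norm v)\<^sup>2 - (norm w)\<^sup>2) / ?n)\<^sup>2"
  have k: "\<bar>k v w\<bar> \<le> C / (?n * ?P) * exp (- ?a * (?n\<^sup>2 + ?Y))"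
    using sa \<open>v \<noteq> w\<close> unfolding structural_assms_def by blast
  have a: "0 < ?a" "0 < C" "\<gamma> \<le> 1" using sa unfolding structural_assms_def by auto
  have P: "1 \<le> ?P" using a by (intro ge_one_powr_ge_zero) auto
  have n: "0 < ?n" using \<open>v \<noteq> w\<close> by simp
  have "C / (?n * ?P) \<le> C / ?n"
    using P n a by (intro divide_left_mono) (auto intro!: mult_pos_pos simp: order.strict_trans2[OF zero_less_one P])
  moreover have "exp (- ?a * (?n\<^sup>2 + ?Y)) \<le> exp (- ?a * ?n\<^sup>2)"
    using a by (simp add: mult_left_mono)
  ultimately have "C / (?n * ?P) * exp (- ?a * (?n\<^sup>2 + ?Y)) \<le> C / ?n * exp (- ?a * ?n\<^sup>2)"
    using a n by (intro mult_mono) auto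
  then show ?thesis using k by (simp add: singular_gaussian_def)
qed

lemma structural_assms_kernel_gradient:
  assumes sa: "structural_assms \<nu> k \<rho> \<gamma> \<nu>0 \<nu>1 C" and "v \<noteq> w"
  shows "\<exists>g. ((\<lambda>u. k u w) has_derivative (\<lambda>z. g \<bullet> z)) (at v) \<and> norm g \<le> C * (1 + norm v) / (norm (v - w))\<^sup>2"
proof -
  let ?a = "(1 - \<rho>) / 4" and ?n = "norm (v - w)"
  let ?P = "(1 + norm v + norm w) powr (1 - \<gamma>)"
  let ?Y = "(((norm v)\<^sup>2 - (norm w)\<^sup>2) / ?n)\<^sup>2"
  obtain g where g: "((\<lambda>u. k u w) has_derivative (\<lambda>z. g \<bullet> z)) (at v)"
    "norm g \<le> C * (1 + norm v) / (?n\<^sup>2 * ?P) * exp (- ?a * (?n\<^sup>2 + ?Y))"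
    using sa \<open>v \<noteq> w\<close> unfolding structural_assms_def by blast
  have a: "0 < ?a" "0 < C" "\<gamma> \<le> 1" using sa unfolding structural_assms_def by auto
  have P: "1 \<le> ?P" using a by (intro ge_one_powr_ge_zero) auto
  have n: "0 < ?n" using \<open>v \<noteq> w\<close> by simp
  have "C * (1 + norm v) / (?n\<^sup>2 * ?P) \<le> C * (1 + norm v) / ?n\<^sup>2"
    using P n a by (intro divide_left_mono) (auto intro!: mult_pos_pos simp: order.strict_trans2[OF zero_less_one P])
  moreover have "exp (- ?a * (?n\<^sup>2 + ?Y)) \<le> 1"
    using a by simp
  ultimately have "C * (1 + norm v) / (?n\<^sup>2 * ?P) * exp (- ?a * (?n\<^sup>2 + ?Y)) \<le> C * (1 + norm v) / ?n\<^sup>2"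
    using a n by (intro order.trans[OF mult_right_le_one_le]) auto
  then show ?thesis using g by force
qed

lemma structural_assms_kernel_lipschitz:
  assumes sa: "structural_assms \<nu> k \<rho> \<gamma> \<nu>0 \<nu>1 C"
    and \<delta>: "0 < \<delta>" and v: "v \<in> ball v0 \<delta>" and w: "\<And>u. u \<in> ball v0 \<delta> \<Longrightarrow> \<delta> \<le> norm (u - w)"
  shows "\<bar>k v w - k v0 w\<bar> \<le> C * (1 + norm v0 + \<delta>) / \<delta>\<^sup>2 * norm (v - v0)"
proof -
  define G where "G u = (SOME g. ((\<lambda>u. k u w) has_derivative (\<lambda>z. g \<bullet> z)) (at u)
      \<and> norm g \<le> C * (1 + norm u) / (norm (u - w))\<^sup>2)" for u
  have C: "0 < C" using sa unfolding structural_assms_def by auto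
  have G: "((\<lambda>u. k u w) has_derivative (\<lambda>z. G u \<bullet> z)) (at u) \<and> norm (G u) \<le> C * (1 + norm u) / (norm (u - w))\<^sup>2"
    if "u \<in> ball v0 \<delta>" for u
  proof -
    have "u \<noteq> w" using w[OF that] \<delta> by auto
    from someI_ex[OF structural_assms_kernel_gradient[OF sa this]] show ?thesis unfolding G_def .
  qed
  have "norm (k v w - k v0 w) \<le> C * (1 + norm v0 + \<delta>) / \<delta>\<^sup>2 * norm (v - v0)"
  proof (rule differentiable_bound[where S = "ball v0 \<delta>" and f' = "\<lambda>u z. G u \<bullet> z"])
    show "((\<lambda>u. k u w) has_derivative (\<lambda>z. G u \<bullet> z)) (at u within ball v0 \<delta>)" if "u \<in> ball v0 \<delta>" for u
      using G[OF that] by (auto intro: has_derivative_at_withinI)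
    show "onorm (\<lambda>z. G u \<bullet> z) \<le> C * (1 + norm v0 + \<delta>) / \<delta>\<^sup>2" if u: "u \<in> ball v0 \<delta>" for u
    proof -
      have "onorm (\<lambda>z. G u \<bullet> z) \<le> norm (G u)"
        by (rule onorm_le) (simp add: Cauchy_Schwarz_ineq2)
      also have "\<dots> \<le> C * (1 + norm u) / (norm (u - w))\<^sup>2" using G[OF u] by simp
      also have "\<dots> \<le> C * (1 + norm v0 + \<delta>) / \<delta>\<^sup>2"
      proof (intro frac_le mult_left_mono power_mono)
        show "1 + norm u \<le> 1 + norm v0 + \<delta>"
          using u norm_triangle_ineq2[of u v0] by (auto simp: dist_norm norm_minus_commute)
      qed (use C \<delta> w[OF u] in auto)
      finally show ?thesis .
    qed
  qed (use v \<delta> in auto)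
  then show ?thesis by simp
qed

lemma structural_assms_kernel_continuous:
  assumes sa: "structural_assms \<nu> k \<rho> \<gamma> \<nu>0 \<nu>1 C"
  shows "continuous_on {p. fst p \<noteq> snd p} (\<lambda>p. k (fst p) (snd p))"
proof -
  have "open {p::R3 \<times> R3. fst p \<noteq> snd p}"
    by (intro open_Collect_neq continuous_intros)
  moreover have "isCont (\<lambda>p. k (fst p) (snd p)) (v0, w0)" if "v0 \<noteq> w0" for v0 w0
  proof -
    define \<delta> where "\<delta> = dist v0 w0 / 3"
    have \<delta>: "0 < \<delta>" using that by (simp add: \<delta>_def)
    define L where "L = C * (1 + norm v0 + \<delta>) / \<delta>\<^sup>2"
    have lip: "\<bar>k v w - k v0 w\<bar> \<le> L * norm (v - v0)" if "v \<in> ball v0 \<delta>" "w \<in> ball w0 \<delta>" for v w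
      unfolding L_def
    proof (rule structural_assms_kernel_lipschitz[OF sa \<delta> that(1)])
      fix u assume "u \<in> ball v0 \<delta>"
      then show "\<delta> \<le> norm (u - w)" using that(2) dist_triangle[of v0 w0 u] dist_triangle[of u w0 w]
        by (auto simp: \<delta>_def dist_norm norm_minus_commute)
    qed
    have "isCont (\<lambda>u. k u v0) w0"
      using structural_assms_kernel_gradient[OF sa, of w0 v0] that has_derivative_continuous by auto
    moreover have "(\<lambda>u. k u v0) = k v0" using sa unfolding structural_assms_def by auto
    ultimately have "isCont (k v0) w0" by simp
    then have "((\<lambda>p. k v0 (snd p)) \<longlongrightarrow> k v0 w0) (at (v0, w0))"
      using isCont_tendsto_compose[of w0 "k v0" snd] tendsto_snd[OF tendsto_ident_at[of "(v0, w0)" UNIV]]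
      by simp
    moreover have "((\<lambda>p. k (fst p) (snd p) - k v0 (snd p)) \<longlongrightarrow> 0) (at (v0, w0))"
    proof (rule Lim_null_comparison)
      have "eventually (\<lambda>p. p \<in> ball v0 \<delta> \<times> ball w0 \<delta>) (at (v0, w0))"
        using \<delta> by (intro eventually_at_in_open') (auto intro: open_Times)
      then show "eventually (\<lambda>p. norm (k (fst p) (snd p) - k v0 (snd p)) \<le> L * norm (fst p - v0)) (at (v0, w0))"
        by eventually_elim (use lip in auto)
      have "((\<lambda>p. L * norm (fst p - v0)) \<longlongrightarrow> L * norm (fst (v0, w0) - v0)) (at (v0, w0))"
        by (intro tendsto_intros)
      then show "((\<lambda>p. L * norm (fst p - v0)) \<longlongrightarrow> 0) (at (v0, w0))" by simp
    qed
    ultimately have "((\<lambda>p. (k (fst p) (snd p) - k v0 (snd p)) + k v0 (snd p)) \<longlongrightarrow> 0 + k v0 w0) (at (v0, w0))"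
      by (intro tendsto_add)
    then show ?thesis unfolding isCont_def by simp
  qed
  ultimately show ?thesis by (subst continuous_on_eq_continuous_at) auto
qed

text \<open>The kernel is not assumed to be measurable on the diagonal, a null set; cutting it off there
  makes it Borel.\<close>

definition off_diagonal :: "(R3 \<Rightarrow> R3 \<Rightarrow> real) \<Rightarrow> R3 \<times> R3 \<Rightarrow> real" where
  "off_diagonal k p = (if fst p \<noteq> snd p then k (fst p) (snd p) else 0)"

lemma structural_assms_off_diagonal_borel:
  assumes "structural_assms \<nu> k \<rho> \<gamma> \<nu>0 \<nu>1 C"
  shows "off_diagonal k \<in> borel_measurable (borel \<Otimes>\<^sub>M borel)"
proof -
  have "open {p::R3 \<times> R3. fst p \<noteq> snd p}"
    by (intro open_Collect_neq continuous_intros)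
  moreover have "off_diagonal k = (\<lambda>p. if p \<in> {p. fst p \<noteq> snd p} then k (fst p) (snd p) else 0)"
    by (auto simp: off_diagonal_def)
  ultimately have "off_diagonal k \<in> borel_measurable borel"
    using borel_measurable_continuous_on_if[OF borel_open structural_assms_kernel_continuous[OF assms]
        continuous_on_const] by simp
  then show ?thesis by (simp only: borel_prod)
qed

lemma structural_assms_off_diagonal_bound:
  assumes "structural_assms \<nu> k \<rho> \<gamma> \<nu>0 \<nu>1 C"
  shows "\<bar>off_diagonal k (v, w)\<bar> \<le> C * singular_gaussian ((1 - \<rho>) / 4) 1 (v - w)"
  using assms structural_assms_kernel_bound[OF assms, of v w]
  by (cases "v = w") (auto simp: off_diagonal_def structural_assms_def singular_gaussian_nonneg)

section \<open>Free transport\<close>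

lemma nn_integral_along_lines_le:
  fixes f :: "'a::euclidean_space \<Rightarrow> real" and U :: "('a \<times> real) set"
  assumes [measurable]: "f \<in> borel_measurable borel" "U \<in> sets (borel \<Otimes>\<^sub>M borel)" "\<Omega> \<in> sets borel"
    and U: "\<And>x s. (x, s) \<in> U \<Longrightarrow> 0 < s \<and> x - s *\<^sub>R v \<in> \<Omega>" and c: "0 < c"
  shows "(\<integral>\<^sup>+x. \<integral>\<^sup>+s. ennreal (indicator U (x, s) * exp (- c * s) * (f (x - s *\<^sub>R v))\<^sup>2) \<partial>lborel \<partial>lborel)
    \<le> ennreal (1 / c) * (\<integral>\<^sup>+y. indicator \<Omega> y * ennreal ((f y)\<^sup>2) \<partial>lborel)"
proof -
  let ?G = "\<integral>\<^sup>+y. indicator \<Omega> y * ennreal ((f y)\<^sup>2) \<partial>lborel"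
  have "(\<integral>\<^sup>+x. \<integral>\<^sup>+s. ennreal (indicator U (x, s) * exp (- c * s) * (f (x - s *\<^sub>R v))\<^sup>2) \<partial>lborel \<partial>lborel)
      = (\<integral>\<^sup>+s. \<integral>\<^sup>+x. ennreal (indicator U (x, s) * exp (- c * s) * (f (x - s *\<^sub>R v))\<^sup>2) \<partial>lborel \<partial>lborel)"
    by (rule lborel_pair.Fubini'[symmetric])
      (simp add: measurable_pair_lborel_eq)
  also have "\<dots> \<le> (\<integral>\<^sup>+s. ennreal (exp (- c * s)) * indicator {0..} s *
      (\<integral>\<^sup>+x. indicator \<Omega> (x - s *\<^sub>R v) * ennreal ((f (x - s *\<^sub>R v))\<^sup>2) \<partial>lborel) \<partial>lborel)"
  proof (intro nn_integral_mono)
    fix s :: real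
    have "(\<integral>\<^sup>+x. ennreal (indicator U (x, s) * exp (- c * s) * (f (x - s *\<^sub>R v))\<^sup>2) \<partial>lborel)
        \<le> (\<integral>\<^sup>+x. ennreal (exp (- c * s)) * indicator {0..} s *
            (indicator \<Omega> (x - s *\<^sub>R v) * ennreal ((f (x - s *\<^sub>R v))\<^sup>2)) \<partial>lborel)"
      using U by (intro nn_integral_mono) (auto simp: indicator_def ennreal_mult less_imp_le)
    also have "\<dots> = ennreal (exp (- c * s)) * indicator {0..} s *
        (\<integral>\<^sup>+x. indicator \<Omega> (x - s *\<^sub>R v) * ennreal ((f (x - s *\<^sub>R v))\<^sup>2) \<partial>lborel)"
      by (rule nn_integral_cmult) measurable
    finally show "(\<integral>\<^sup>+x. ennreal (indicator U (x, s) * exp (- c * s) * (f (x - s *\<^sub>R v))\<^sup>2) \<partial>lborel)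
        \<le> \<dots>" .
  qed
  also have "\<dots> = (\<integral>\<^sup>+s. ennreal (exp (- c * s)) * indicator {0..} s * ?G \<partial>lborel)"
    by (subst nn_integral_lborel_translate[where f = "\<lambda>y. indicator \<Omega> y * ennreal ((f y)\<^sup>2)"]) simp_all
  also have "\<dots> = (\<integral>\<^sup>+s. ennreal (exp (- c * s)) * indicator {0..} s \<partial>lborel) * ?G"
    by (rule nn_integral_multc) measurable
  also have "\<dots> = ennreal (1 / c) * ?G"
    by (simp only: nn_integral_exp_neg_halfline[OF c])
  finally show ?thesis .
qed

lemma nn_integral_square_transport_le:
  fixes f :: "'a::euclidean_space \<Rightarrow> real" and U :: "('a \<times> real) set"
  assumes [measurable]: "f \<in> borel_measurable borel" "U \<in> sets (borel \<Otimes>\<^sub>M borel)" "\<Omega> \<in> sets borel"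
    and U: "\<And>x s. (x, s) \<in> U \<Longrightarrow> 0 < s \<and> x - s *\<^sub>R v \<in> \<Omega> \<and> s * norm v \<le> d"
    and c: "0 < c" and d: "0 \<le> d" and v: "v \<noteq> 0"
  shows "(\<integral>\<^sup>+x. ennreal ((\<integral>s. indicator U (x, s) * exp (- c * s) * f (x - s *\<^sub>R v) \<partial>lborel)\<^sup>2) \<partial>lborel)
    \<le> ennreal (d / (c * norm v)) * (\<integral>\<^sup>+y. indicator \<Omega> y * ennreal ((f y)\<^sup>2) \<partial>lborel)"
proof -
  let ?W = "\<lambda>x s. indicator U (x, s) * exp (- c * s)"
  have W: "\<bar>?W x s\<bar> \<le> ?W x s" "?W x s \<le> indicator {0..d / norm v} s" for x s
  proof -
    show "\<bar>?W x s\<bar> \<le> ?W x s" by simp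
    show "?W x s \<le> indicator {0..d / norm v} s"
    proof (cases "(x, s) \<in> U")
      case True
      then have "0 < s" "s \<le> d / norm v" using U[OF True] v by (auto simp: field_simps)
      then show ?thesis using True c by simp
    qed simp
  qed
  have "(\<integral>\<^sup>+x. ennreal ((\<integral>s. ?W x s * f (x - s *\<^sub>R v) \<partial>lborel)\<^sup>2) \<partial>lborel)
      \<le> (\<integral>\<^sup>+x. ennreal (d / norm v) * (\<integral>\<^sup>+s. ennreal (?W x s * (f (x - s *\<^sub>R v))\<^sup>2) \<partial>lborel) \<partial>lborel)"
  proof (intro nn_integral_mono)
    fix x
    have "(\<integral>\<^sup>+s. ennreal (?W x s) \<partial>lborel) \<le> (\<integral>\<^sup>+s. indicator {0..d / norm v} s \<partial>lborel)"
      using W(2) by (intro nn_integral_mono) (simp add: ennreal_leI flip: ennreal_indicator)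
    also have "\<dots> = ennreal (d / norm v)"
      using d by simp
    finally have "(\<integral>\<^sup>+s. ennreal (?W x s) \<partial>lborel) \<le> ennreal (d / norm v)" .
    then show "ennreal ((\<integral>s. ?W x s * f (x - s *\<^sub>R v) \<partial>lborel)\<^sup>2)
        \<le> ennreal (d / norm v) * (\<integral>\<^sup>+s. ennreal (?W x s * (f (x - s *\<^sub>R v))\<^sup>2) \<partial>lborel)"
      by (intro order.trans[OF ennreal_square_integral_le[OF _ _ W(1)]] mult_right_mono) simp_all
  qed
  also have "\<dots> = ennreal (d / norm v) *
      (\<integral>\<^sup>+x. \<integral>\<^sup>+s. ennreal (indicator U (x, s) * exp (- c * s) * (f (x - s *\<^sub>R v))\<^sup>2) \<partial>lborel \<partial>lborel)"
    by (rule nn_integral_cmult) measurable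
  also have "\<dots> \<le> ennreal (d / norm v) * (ennreal (1 / c) * (\<integral>\<^sup>+y. indicator \<Omega> y * ennreal ((f y)\<^sup>2) \<partial>lborel))"
    by (intro mult_left_mono nn_integral_along_lines_le) (use U c in auto)
  also have "\<dots> = ennreal (d / (c * norm v)) * (\<integral>\<^sup>+y. indicator \<Omega> y * ennreal ((f y)\<^sup>2) \<partial>lborel)"
    using c d by (simp add: mult.assoc[symmetric] field_simps flip: ennreal_mult)
  finally show ?thesis .
qed

text \<open>Unlike the set of times before the exit time, the flight set is open, hence Borel; the two
  agree except at the exit time itself.\<close>

definition flight_set :: "'a::real_normed_vector set \<Rightarrow> (('a \<times> 'a) \<times> real) set" where
  "flight_set \<Omega> = {((x, v), s). 0 < s \<and> (\<forall>t\<in>{0..1}. x - (t * s) *\<^sub>R v \<in> \<Omega>)}"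

lemma open_flight_set:
  fixes \<Omega> :: "'a::euclidean_space set"
  assumes "open \<Omega>"
  shows "open (flight_set \<Omega>)"
proof -
  define T where "T = (\<lambda>(t, (x, v), s). x - (t * s) *\<^sub>R v) -` (- \<Omega>)"
  have "closed T"
    unfolding T_def case_prod_beta
    by (rule continuous_closed_vimage) (use assms in \<open>auto intro!: continuous_intros\<close>)
  then have "closed {q. \<exists>t. t \<in> {0..1::real} \<and> (t, q) \<in> T}"
    by (rule closed_compact_projection[OF compact_Icc])
  moreover have "flight_set \<Omega> = {q. 0 < snd q} \<inter> - {q. \<exists>t. t \<in> {0..1::real} \<and> (t, q) \<in> T}"
    by (auto simp: flight_set_def T_def)
  moreover have "open {q :: ('a \<times> 'a) \<times> real. 0 < snd q}"
    by (intro open_Collect_less continuous_intros)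
  ultimately show ?thesis by (auto simp: open_Compl)
qed

lemma flight_set_in_sets:
  fixes \<Omega> :: "'a::euclidean_space set"
  assumes "open \<Omega>"
  shows "flight_set \<Omega> \<in> sets ((borel \<Otimes>\<^sub>M borel) \<Otimes>\<^sub>M borel)"
  using borel_open[OF open_flight_set[OF assms]] by (simp only: borel_prod)

lemma flight_set_bounded_length:
  assumes "bounded \<Omega>" and "((x, v), s) \<in> flight_set \<Omega>"
  shows "0 < s \<and> x - s *\<^sub>R v \<in> \<Omega> \<and> s * norm v \<le> diameter \<Omega>"
proof -
  have s: "0 < s" and seg: "\<And>t. t \<in> {0..1} \<Longrightarrow> x - (t * s) *\<^sub>R v \<in> \<Omega>"
    using assms(2) by (auto simp: flight_set_def)
  have "dist x (x - s *\<^sub>R v) \<le> diameter \<Omega>"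
    using seg[of 0] seg[of 1] by (intro diameter_bounded_bound[OF assms(1)]) auto
  then show ?thesis using s seg[of 1] by (simp add: dist_norm)
qed

lemma flight_set_iff_exit_time:
  assumes x: "x \<in> \<Omega>" and s: "s \<noteq> real_of_ereal (exit_time \<Omega> x v)"
  shows "((x, v), s) \<in> flight_set \<Omega> \<longleftrightarrow> 0 < s \<and> ereal s < exit_time \<Omega> x v"
proof
  assume "((x, v), s) \<in> flight_set \<Omega>"
  then have s0: "0 < s" and seg: "\<And>t. t \<in> {0..1} \<Longrightarrow> x - (t * s) *\<^sub>R v \<in> \<Omega>"
    by (auto simp: flight_set_def)
  have "\<not> exit_time \<Omega> x v < ereal s"
  proof
    assume "exit_time \<Omega> x v < ereal s"
    then obtain s' where s': "0 < s'" "x - s' *\<^sub>R v \<notin> \<Omega>" "s' < s"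
      unfolding exit_time_def Inf_less_iff by auto
    then show False using seg[of "s' / s"] s0 by simp
  qed
  moreover have "exit_time \<Omega> x v \<noteq> ereal s" using s by auto
  ultimately show "0 < s \<and> ereal s < exit_time \<Omega> x v" using s0 by auto
next
  assume se: "0 < s \<and> ereal s < exit_time \<Omega> x v"
  have "x - (t * s) *\<^sub>R v \<in> \<Omega>" if t: "t \<in> {0..1}" for t
  proof (cases "t = 0")
    case False
    then have ts: "0 < t * s" "t * s \<le> s" using t se by (auto simp: mult_le_cancel_right1)
    show ?thesis
    proof (rule ccontr)
      assume "x - (t * s) *\<^sub>R v \<notin> \<Omega>"
      then have "exit_time \<Omega> x v \<le> ereal (t * s)"
        using ts unfolding exit_time_def by (intro Inf_lower) auto
      then show False using se ts by (meson ereal_less_eq(3) leD order.trans)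
    qed
  qed (use x in simp)
  then show "((x, v), s) \<in> flight_set \<Omega>" using se by (simp add: flight_set_def)
qed

definition S_op_lborel :: "R3 set \<Rightarrow> (R3 \<Rightarrow> real) \<Rightarrow> (R3 \<times> R3 \<Rightarrow> real) \<Rightarrow> R3 \<times> R3 \<Rightarrow> real" where
  "S_op_lborel \<Omega> \<nu> f p =
     (\<integral>s. indicator (flight_set \<Omega>) (p, s) * exp (- \<nu> (snd p) * s) * f (fst p - s *\<^sub>R snd p, snd p) \<partial>lborel)"

lemma borel_measurable_S_op_lborel [measurable]:
  assumes "open \<Omega>" and [measurable]: "\<nu> \<in> borel_measurable borel" "f \<in> borel_measurable (borel \<Otimes>\<^sub>M borel)"
  shows "S_op_lborel \<Omega> \<nu> f \<in> borel_measurable (borel \<Otimes>\<^sub>M borel)"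
proof -
  have [measurable]: "flight_set \<Omega> \<in> sets ((borel \<Otimes>\<^sub>M borel) \<Otimes>\<^sub>M borel)"
    by (rule flight_set_in_sets[OF assms(1)])
  show ?thesis
    unfolding S_op_lborel_def
    by (rule lborel.borel_measurable_lebesgue_integral)
       (simp add: measurable_pair_lborel_eq)
qed

lemma nn_integral_S_op_lborel_slice_le:
  assumes [measurable]: "f \<in> borel_measurable (borel \<Otimes>\<^sub>M borel)" "\<nu> \<in> borel_measurable borel"
    and \<Omega>: "open \<Omega>" "bounded \<Omega>" and \<nu>: "0 < \<nu> v" and v: "v \<noteq> 0"
  shows "(\<integral>\<^sup>+x. ennreal ((S_op_lborel \<Omega> \<nu> f (x, v))\<^sup>2) \<partial>lborel)
    \<le> ennreal (diameter \<Omega> / (\<nu> v * norm v)) * (\<integral>\<^sup>+y. indicator \<Omega> y * ennreal ((f (y, v))\<^sup>2) \<partial>lborel)"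
proof -
  have [measurable]: "flight_set \<Omega> \<in> sets ((borel \<Otimes>\<^sub>M borel) \<Otimes>\<^sub>M borel)" "\<Omega> \<in> sets borel"
    using \<Omega>(1) by (auto intro: flight_set_in_sets)
  have slice: "indicator (flight_set \<Omega>) ((x, v), s) = indicator {(x, s). ((x, v), s) \<in> flight_set \<Omega>} (x, s)"
    for x :: R3 and s :: real
    by (simp add: indicator_def)
  show ?thesis
    unfolding S_op_lborel_def fst_conv snd_conv slice
  proof (rule nn_integral_square_transport_le)
    have "Measurable.pred (borel \<Otimes>\<^sub>M borel) (\<lambda>(x, s). ((x, v), s) \<in> flight_set \<Omega>)"
      by measurable
    then show "{(x, s). ((x, v), s) \<in> flight_set \<Omega>} \<in> sets (borel \<Otimes>\<^sub>M borel)"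
      by (simp add: pred_def space_pair_measure)
  qed (use flight_set_bounded_length[OF \<Omega>(2)] diameter_ge_0[OF \<Omega>(2)] \<nu> v in auto)
qed

lemma nn_integral_S_op_lborel_square_le:
  assumes [measurable]: "f \<in> borel_measurable (borel \<Otimes>\<^sub>M borel)" "\<nu> \<in> borel_measurable borel"
    and \<Omega>: "open \<Omega>" "bounded \<Omega>" and \<nu>: "\<And>v. \<nu>0 \<le> \<nu> v" "0 < \<nu>0"
  shows "(\<integral>\<^sup>+v. \<integral>\<^sup>+x. ennreal ((S_op_lborel \<Omega> \<nu> f (x, v))\<^sup>2) \<partial>lborel \<partial>lborel)
    \<le> ennreal (diameter \<Omega> / \<nu>0) * (\<integral>\<^sup>+v. \<integral>\<^sup>+y. ennreal ((f (y, v))\<^sup>2 / norm v) \<partial>lborel \<partial>lborel)"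
proof -
  define d where "d = diameter \<Omega>"
  have d: "0 \<le> d" unfolding d_def by (rule diameter_ge_0[OF \<Omega>(2)])
  have [measurable]: "\<Omega> \<in> sets borel" using \<Omega>(1) by auto
  have "(\<integral>\<^sup>+x. ennreal ((S_op_lborel \<Omega> \<nu> f (x, v))\<^sup>2) \<partial>lborel)
      \<le> ennreal (d / \<nu>0) * (\<integral>\<^sup>+y. ennreal ((f (y, v))\<^sup>2 / norm v) \<partial>lborel)" if v: "v \<noteq> 0" for v
  proof -
    have "ennreal (d / (\<nu> v * norm v)) * (indicator \<Omega> y * ennreal ((f (y, v))\<^sup>2))
        \<le> ennreal (d / \<nu>0) * ennreal ((f (y, v))\<^sup>2 / norm v)" for y
    proof -
      have "d / (\<nu> v * norm v) * (f (y, v))\<^sup>2 \<le> d / \<nu>0 * ((f (y, v))\<^sup>2 / norm v)"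
        using \<nu> d v by (simp add: frac_le mult_right_mono)
      then have "ennreal (d / (\<nu> v * norm v)) * ennreal ((f (y, v))\<^sup>2)
          \<le> ennreal (d / \<nu>0) * ennreal ((f (y, v))\<^sup>2 / norm v)"
        using \<nu> d by (simp add: ennreal_leI flip: ennreal_mult'' ennreal_mult')
      then show ?thesis by (simp add: indicator_def)
    qed
    then have "(\<integral>\<^sup>+y. ennreal (d / (\<nu> v * norm v)) * (indicator \<Omega> y * ennreal ((f (y, v))\<^sup>2)) \<partial>lborel)
        \<le> (\<integral>\<^sup>+y. ennreal (d / \<nu>0) * ennreal ((f (y, v))\<^sup>2 / norm v) \<partial>lborel)"
      by (intro nn_integral_mono)
    moreover have "0 < \<nu> v" using \<nu>(2) \<nu>(1)[of v] by linarith
    ultimately show ?thesis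
      using nn_integral_S_op_lborel_slice_le[OF assms(1,2) \<Omega>, of v] v
      by (simp add: nn_integral_cmult d_def)
  qed
  then have "(\<integral>\<^sup>+v. \<integral>\<^sup>+x. ennreal ((S_op_lborel \<Omega> \<nu> f (x, v))\<^sup>2) \<partial>lborel \<partial>lborel)
      \<le> (\<integral>\<^sup>+v. ennreal (d / \<nu>0) * (\<integral>\<^sup>+y. ennreal ((f (y, v))\<^sup>2 / norm v) \<partial>lborel) \<partial>lborel)"
    by (intro nn_integral_mono_AE) (use AE_lborel_singleton[of 0] in \<open>eventually_elim, auto\<close>)
  also have "\<dots> = ennreal (d / \<nu>0) * (\<integral>\<^sup>+v. \<integral>\<^sup>+y. ennreal ((f (y, v))\<^sup>2 / norm v) \<partial>lborel \<partial>lborel)"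
    by (rule nn_integral_cmult) measurable
  finally show ?thesis unfolding d_def .
qed

lemma S_op_eq_S_op_lborel:
  assumes [measurable]: "f \<in> borel_measurable (borel \<Otimes>\<^sub>M borel)" "\<nu> \<in> borel_measurable borel"
    and "open \<Omega>" "x \<in> \<Omega>" and N: "AE s in lborel. x - s *\<^sub>R v \<notin> N"
    and fg: "\<And>y. y \<in> \<Omega> \<Longrightarrow> y \<notin> N \<Longrightarrow> g y v = f (y, v)"
  shows "S_op \<Omega> \<nu> g x v = S_op_lborel \<Omega> \<nu> f (x, v)"
  unfolding S_op_def S_op_lborel_def set_lebesgue_integral_def fst_conv snd_conv
proof (rule integral_lebesgue_eq_lborel_AE)
  have [measurable]: "flight_set \<Omega> \<in> sets ((borel \<Otimes>\<^sub>M borel) \<Otimes>\<^sub>M borel)"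
    by (rule flight_set_in_sets) fact
  show "(\<lambda>s. indicator (flight_set \<Omega>) ((x, v), s) * exp (- \<nu> v * s) * f (x - s *\<^sub>R v, v)) \<in> borel_measurable borel"
    by measurable
  show "AE s in lborel. indicator (flight_set \<Omega>) ((x, v), s) * exp (- \<nu> v * s) * f (x - s *\<^sub>R v, v)
      = indicator {s. 0 < s \<and> ereal s < exit_time \<Omega> x v} s *\<^sub>R (exp (- \<nu> v * s) * g (x - s *\<^sub>R v) v)"
    using N AE_lborel_singleton[of "real_of_ereal (exit_time \<Omega> x v)"]
  proof eventually_elim
    case (elim s)
    then have "((x, v), s) \<in> flight_set \<Omega> \<longleftrightarrow> 0 < s \<and> ereal s < exit_time \<Omega> x v"
      using flight_set_iff_exit_time[OF \<open>x \<in> \<Omega>\<close>] by blast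
    moreover have "x - s *\<^sub>R v \<in> \<Omega>" if "((x, v), s) \<in> flight_set \<Omega>"
      using that by (auto simp: flight_set_def dest: bspec[of _ _ 1])
    ultimately show ?case using fg elim by (auto simp: indicator_def)
  qed
qed

section \<open>The collision operator\<close>

definition Kop_lborel :: "(R3 \<times> R3 \<Rightarrow> real) \<Rightarrow> (R3 \<times> R3 \<Rightarrow> real) \<Rightarrow> R3 \<times> R3 \<Rightarrow> real" where
  "Kop_lborel \<kappa> h p = (\<integral>w. \<kappa> (snd p, w) * h (fst p, w) \<partial>lborel)"

lemma borel_measurable_Kop_lborel [measurable]:
  assumes [measurable]: "\<kappa> \<in> borel_measurable (borel \<Otimes>\<^sub>M borel)" "h \<in> borel_measurable (borel \<Otimes>\<^sub>M borel)"
  shows "Kop_lborel \<kappa> h \<in> borel_measurable (borel \<Otimes>\<^sub>M borel)"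
  unfolding Kop_lborel_def
  by (rule lborel.borel_measurable_lebesgue_integral)
     (simp add: measurable_pair_lborel_eq)

lemma Kop_lborel_square_le:
  assumes [measurable]: "\<kappa> \<in> borel_measurable (borel \<Otimes>\<^sub>M borel)" "h \<in> borel_measurable (borel \<Otimes>\<^sub>M borel)"
    and \<kappa>: "\<And>v w. \<bar>\<kappa> (v, w)\<bar> \<le> C * singular_gaussian a 1 (v - w)" and C: "0 \<le> C"
  shows "ennreal ((Kop_lborel \<kappa> h (y, v))\<^sup>2) \<le> ennreal C * (\<integral>\<^sup>+z. ennreal (singular_gaussian a 1 z) \<partial>lborel)
    * (\<integral>\<^sup>+w. ennreal (C * singular_gaussian a 1 (v - w) * (h (y, w))\<^sup>2) \<partial>lborel)"
proof -
  have "(\<integral>\<^sup>+w. ennreal (C * singular_gaussian a 1 (v - w)) \<partial>lborel)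
      = (\<integral>\<^sup>+w. ennreal C * ennreal (singular_gaussian a 1 (w - v)) \<partial>lborel)"
    using C by (intro nn_integral_cong) (simp add: singular_gaussian_def norm_minus_commute flip: ennreal_mult')
  also have "\<dots> = ennreal C * (\<integral>\<^sup>+w. ennreal (singular_gaussian a 1 (w - v)) \<partial>lborel)"
    by (rule nn_integral_cmult) simp
  also have "\<dots> = ennreal C * (\<integral>\<^sup>+z. ennreal (singular_gaussian a 1 z) \<partial>lborel)"
    by (subst nn_integral_lborel_translate[where f = "\<lambda>z. ennreal (singular_gaussian a 1 z)"]) simp_all
  finally show ?thesis
    unfolding Kop_lborel_def using \<kappa>
    by (intro order.trans[OF ennreal_square_integral_le[where g = "\<lambda>w. C * singular_gaussian a 1 (v - w)"]])
       simp_all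
qed

lemma nn_integral_singular_gaussian_div_norm_Tonelli:
  fixes h :: "R3 \<times> R3 \<Rightarrow> real"
  assumes [measurable]: "h \<in> borel_measurable (borel \<Otimes>\<^sub>M borel)" and a: "0 \<le> a" and C: "0 \<le> C"
  shows "(\<integral>\<^sup>+v. \<integral>\<^sup>+y. \<integral>\<^sup>+w. ennreal (C * singular_gaussian a 1 (v - w) * (h (y, w))\<^sup>2 / norm v)
      \<partial>lborel \<partial>lborel \<partial>lborel)
    \<le> ennreal C * (2 * (\<integral>\<^sup>+z. ennreal (singular_gaussian a 2 z) \<partial>lborel))
      * (\<integral>\<^sup>+y. \<integral>\<^sup>+w. ennreal ((h (y, w))\<^sup>2) \<partial>lborel \<partial>lborel)"
  (is "?L \<le> ?J * ?H")
proof -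
  let ?\<Psi> = "\<lambda>v y w. ennreal (C * singular_gaussian a 1 (v - w) * (h (y, w))\<^sup>2 / norm v)"
  have [measurable]: "case_prod f \<in> borel_measurable (borel \<Otimes>\<^sub>M borel) \<Longrightarrow>
      case_prod f \<in> borel_measurable (lborel \<Otimes>\<^sub>M lborel)" for f :: "R3 \<Rightarrow> R3 \<Rightarrow> ennreal"
    by (simp add: measurable_pair_lborel_eq)
  have "?L = (\<integral>\<^sup>+y. \<integral>\<^sup>+v. \<integral>\<^sup>+w. ?\<Psi> v y w \<partial>lborel \<partial>lborel \<partial>lborel)"
    by (rule lborel_pair.Fubini'[symmetric]) measurable
  also have "\<dots> = (\<integral>\<^sup>+y. \<integral>\<^sup>+w. \<integral>\<^sup>+v. ?\<Psi> v y w \<partial>lborel \<partial>lborel \<partial>lborel)"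
    by (intro nn_integral_cong lborel_pair.Fubini'[symmetric]) measurable
  also have "\<dots> \<le> (\<integral>\<^sup>+y. \<integral>\<^sup>+w. ennreal ((h (y, w))\<^sup>2) * ?J \<partial>lborel \<partial>lborel)"
  proof (intro nn_integral_mono)
    fix y w :: R3
    have "(\<integral>\<^sup>+v. ?\<Psi> v y w \<partial>lborel)
        = (\<integral>\<^sup>+v. ennreal (C * (h (y, w))\<^sup>2) * ennreal (singular_gaussian a 1 (v - w) / norm v) \<partial>lborel)"
      using C by (intro nn_integral_cong) (simp add: field_simps flip: ennreal_mult')
    also have "\<dots> = ennreal (C * (h (y, w))\<^sup>2) * (\<integral>\<^sup>+v. ennreal (singular_gaussian a 1 (v - w) / norm v) \<partial>lborel)"
      by (rule nn_integral_cmult) measurable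
    also have "\<dots> \<le> ennreal (C * (h (y, w))\<^sup>2) * (2 * (\<integral>\<^sup>+z. ennreal (singular_gaussian a 2 z) \<partial>lborel))"
      by (intro mult_left_mono nn_integral_singular_gaussian_div_norm_le a) simp
    also have "\<dots> = ennreal ((h (y, w))\<^sup>2) * ?J"
      using C by (simp add: ennreal_mult' ac_simps)
    finally show "(\<integral>\<^sup>+v. ?\<Psi> v y w \<partial>lborel) \<le> ennreal ((h (y, w))\<^sup>2) * ?J" .
  qed
  also have "\<dots> = ?J * ?H"
    by (simp add: nn_integral_multc mult.commute)
  finally show ?thesis .
qed

lemma nn_integral_Kop_lborel_div_norm_le:
  assumes [measurable]: "\<kappa> \<in> borel_measurable (borel \<Otimes>\<^sub>M borel)" "h \<in> borel_measurable (borel \<Otimes>\<^sub>M borel)"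
    and \<kappa>: "\<And>v w. \<bar>\<kappa> (v, w)\<bar> \<le> C * singular_gaussian a 1 (v - w)" and C: "0 \<le> C" and a: "0 \<le> a"
  shows "(\<integral>\<^sup>+v. \<integral>\<^sup>+y. ennreal ((Kop_lborel \<kappa> h (y, v))\<^sup>2 / norm v) \<partial>lborel \<partial>lborel)
    \<le> ennreal C * (\<integral>\<^sup>+z. ennreal (singular_gaussian a 1 z) \<partial>lborel)
      * (ennreal C * (2 * (\<integral>\<^sup>+z. ennreal (singular_gaussian a 2 z) \<partial>lborel))
         * (\<integral>\<^sup>+y. \<integral>\<^sup>+w. ennreal ((h (y, w))\<^sup>2) \<partial>lborel \<partial>lborel))"
proof -
  define I where "I = ennreal C * (\<integral>\<^sup>+z. ennreal (singular_gaussian a 1 z) \<partial>lborel)"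
  let ?\<Psi> = "\<lambda>v y w. ennreal (C * singular_gaussian a 1 (v - w) * (h (y, w))\<^sup>2 / norm v)"
  have "ennreal ((Kop_lborel \<kappa> h (y, v))\<^sup>2 / norm v) \<le> I * (\<integral>\<^sup>+w. ?\<Psi> v y w \<partial>lborel)" for v y
  proof -
    have "ennreal ((Kop_lborel \<kappa> h (y, v))\<^sup>2 / norm v) = ennreal ((Kop_lborel \<kappa> h (y, v))\<^sup>2) * ennreal (1 / norm v)"
      by (simp flip: ennreal_mult')
    also have "\<dots> \<le> I * (\<integral>\<^sup>+w. ennreal (C * singular_gaussian a 1 (v - w) * (h (y, w))\<^sup>2) \<partial>lborel) * ennreal (1 / norm v)"
      unfolding I_def by (intro mult_right_mono Kop_lborel_square_le \<kappa> C) simp_all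
    also have "\<dots> = I * (\<integral>\<^sup>+w. ennreal (C * singular_gaussian a 1 (v - w) * (h (y, w))\<^sup>2) * ennreal (1 / norm v) \<partial>lborel)"
      by (simp add: nn_integral_multc mult.assoc)
    also have "\<dots> = I * (\<integral>\<^sup>+w. ?\<Psi> v y w \<partial>lborel)"
      using C by (simp add: singular_gaussian_nonneg flip: ennreal_mult)
    finally show ?thesis .
  qed
  then have "(\<integral>\<^sup>+v. \<integral>\<^sup>+y. ennreal ((Kop_lborel \<kappa> h (y, v))\<^sup>2 / norm v) \<partial>lborel \<partial>lborel)
      \<le> (\<integral>\<^sup>+v. \<integral>\<^sup>+y. I * (\<integral>\<^sup>+w. ?\<Psi> v y w \<partial>lborel) \<partial>lborel \<partial>lborel)"
    by (intro nn_integral_mono)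
  also have "\<dots> = I * (\<integral>\<^sup>+v. \<integral>\<^sup>+y. \<integral>\<^sup>+w. ?\<Psi> v y w \<partial>lborel \<partial>lborel \<partial>lborel)"
    by (simp add: nn_integral_cmult)
  also have "\<dots> \<le> I * (ennreal C * (2 * (\<integral>\<^sup>+z. ennreal (singular_gaussian a 2 z) \<partial>lborel))
      * (\<integral>\<^sup>+y. \<integral>\<^sup>+w. ennreal ((h (y, w))\<^sup>2) \<partial>lborel \<partial>lborel))"
    by (intro mult_left_mono nn_integral_singular_gaussian_div_norm_Tonelli a C) simp_all
  finally show ?thesis unfolding I_def .
qed

lemma Kop_eq_Kop_lborel:
  assumes [measurable]: "off_diagonal k \<in> borel_measurable (borel \<Otimes>\<^sub>M borel)"
    "h0 \<in> borel_measurable (borel \<Otimes>\<^sub>M borel)"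
    and h: "AE w in lborel. h y w = h0 (y, w)"
  shows "Kop k h y v = Kop_lborel (off_diagonal k) h0 (y, v)"
  unfolding Kop_def Kop_lborel_def fst_conv snd_conv
proof (rule integral_lebesgue_eq_lborel_AE)
  show "(\<lambda>w. off_diagonal k (v, w) * h0 (y, w)) \<in> borel_measurable borel"
    by measurable
  show "AE w in lborel. off_diagonal k (v, w) * h0 (y, w) = k v w * h y w"
    using h AE_lborel_singleton[of v] by eventually_elim (auto simp: off_diagonal_def)
qed

lemma S_op_Kop_AE_eq_lborel:
  fixes h :: "R3 \<Rightarrow> R3 \<Rightarrow> real"
  assumes sa: "structural_assms \<nu> k \<rho> \<gamma> \<nu>0 \<nu>1 C" and \<Omega>: "open \<Omega>"
    and h: "(\<lambda>(x, v). h x v) \<in> borel_measurable (lebesgue_on (\<Omega> \<times> UNIV))"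
  obtains h0 where "h0 \<in> borel_measurable (borel \<Otimes>\<^sub>M borel)" "\<And>p. p \<notin> \<Omega> \<times> UNIV \<Longrightarrow> h0 p = 0"
    "AE p in lborel. p \<in> \<Omega> \<times> UNIV \<longrightarrow> h (fst p) (snd p) = h0 p"
    "AE p in lborel. p \<in> \<Omega> \<times> UNIV \<longrightarrow>
       S_op \<Omega> \<nu> (Kop k h) (fst p) (snd p) = S_op_lborel \<Omega> \<nu> (Kop_lborel (off_diagonal k) h0) p"
proof -
  have S: "\<Omega> \<times> UNIV \<in> sets borel" using \<Omega> by (intro borel_open open_Times) auto
  obtain h0 where h0: "h0 \<in> borel_measurable borel" "\<And>p. p \<notin> \<Omega> \<times> UNIV \<Longrightarrow> h0 p = 0"
    and h0_ae: "AE p in lborel. p \<in> \<Omega> \<times> UNIV \<longrightarrow> (\<lambda>(x, v). h x v) p = h0 p"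
    using lebesgue_on_ex_borel_representative[OF S h] by blast
  have [measurable]: "h0 \<in> borel_measurable (borel \<Otimes>\<^sub>M borel)" "off_diagonal k \<in> borel_measurable (borel \<Otimes>\<^sub>M borel)"
    "\<nu> \<in> borel_measurable borel"
    using h0(1) structural_assms_off_diagonal_borel[OF sa] structural_assms_nu_borel[OF sa]
    by (simp_all only: borel_prod)
  obtain N where N: "N \<in> null_sets lborel"
    and N_fibers: "\<And>y. y \<notin> N \<Longrightarrow> AE w in lborel. (y, w) \<in> \<Omega> \<times> UNIV \<longrightarrow> h y w = h0 (y, w)"
    using AE_lborel_pair_fibers[OF h0_ae] by auto
  have K: "Kop k h y v = Kop_lborel (off_diagonal k) h0 (y, v)" if "y \<in> \<Omega>" "y \<notin> N" for y v
    using N_fibers[OF that(2)] that(1) by (intro Kop_eq_Kop_lborel) auto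
  show ?thesis
  proof
    show "AE p in lborel. p \<in> \<Omega> \<times> UNIV \<longrightarrow>
        S_op \<Omega> \<nu> (Kop k h) (fst p) (snd p) = S_op_lborel \<Omega> \<nu> (Kop_lborel (off_diagonal k) h0) p"
      using AE_lborel_line_not_in_null[OF N]
      by eventually_elim (auto intro!: S_op_eq_S_op_lborel \<Omega> K)
  qed (use h0 h0_ae in \<open>auto simp: case_prod_beta\<close>)
qed

definition SK_constant :: "real \<Rightarrow> real \<Rightarrow> real \<Rightarrow> real" where
  "SK_constant \<rho> C \<nu>0 = 2 * C\<^sup>2 / \<nu>0
     * enn2real (\<integral>\<^sup>+z. ennreal (singular_gaussian ((1 - \<rho>) / 4) 1 z) \<partial>lborel)
     * enn2real (\<integral>\<^sup>+z. ennreal (singular_gaussian ((1 - \<rho>) / 4) 2 z) \<partial>lborel)"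

lemma SK_constant_nonneg: "0 < \<nu>0 \<Longrightarrow> 0 \<le> SK_constant \<rho> C \<nu>0"
  by (simp add: SK_constant_def)

lemma nn_integral_S_op_lborel_Kop_lborel_le:
  assumes sa: "structural_assms \<nu> k \<rho> \<gamma> \<nu>0 \<nu>1 C" and \<Omega>: "open \<Omega>" "bounded \<Omega>"
    and [measurable]: "h \<in> borel_measurable (borel \<Otimes>\<^sub>M borel)"
  shows "(\<integral>\<^sup>+p. ennreal ((S_op_lborel \<Omega> \<nu> (Kop_lborel (off_diagonal k) h) p)\<^sup>2) \<partial>lborel)
    \<le> ennreal (SK_constant \<rho> C \<nu>0 * diameter \<Omega>) * (\<integral>\<^sup>+p. ennreal ((h p)\<^sup>2) \<partial>lborel)"
proof -
  define a where "a = (1 - \<rho>) / 4"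
  define d where "d = diameter \<Omega>"
  have a: "0 < a" and C: "0 < C" and \<nu>0: "0 < \<nu>0"
    using sa unfolding structural_assms_def a_def by auto
  have d: "0 \<le> d" unfolding d_def by (rule diameter_ge_0[OF \<Omega>(2)])
  have [measurable]: "off_diagonal k \<in> borel_measurable (borel \<Otimes>\<^sub>M borel)" "\<nu> \<in> borel_measurable borel"
    using structural_assms_off_diagonal_borel[OF sa] structural_assms_nu_borel[OF sa] by auto
  define r1 where "r1 = enn2real (\<integral>\<^sup>+z. ennreal (singular_gaussian a 1 z) \<partial>lborel)"
  define r2 where "r2 = enn2real (\<integral>\<^sup>+z. ennreal (singular_gaussian a 2 z) \<partial>lborel)"
  have r1: "(\<integral>\<^sup>+z. ennreal (singular_gaussian a 1 z) \<partial>lborel) = ennreal r1"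
    and r2: "(\<integral>\<^sup>+z. ennreal (singular_gaussian a 2 z) \<partial>lborel) = ennreal r2"
    using nn_integral_singular_gaussian_finite[OF a] by (auto simp: r1_def r2_def less_top)
  let ?F = "Kop_lborel (off_diagonal k) h"
  let ?H = "\<integral>\<^sup>+y. \<integral>\<^sup>+w. ennreal ((h (y, w))\<^sup>2) \<partial>lborel \<partial>lborel"
  have "(\<integral>\<^sup>+p. ennreal ((S_op_lborel \<Omega> \<nu> ?F p)\<^sup>2) \<partial>lborel)
      = (\<integral>\<^sup>+v. \<integral>\<^sup>+x. ennreal ((S_op_lborel \<Omega> \<nu> ?F (x, v))\<^sup>2) \<partial>lborel \<partial>lborel)"
    using \<Omega>(1) by (intro nn_integral_lborel_pair(2)) (simp add: borel_prod[symmetric])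
  also have "\<dots> \<le> ennreal (d / \<nu>0) * (\<integral>\<^sup>+v. \<integral>\<^sup>+y. ennreal ((?F (y, v))\<^sup>2 / norm v) \<partial>lborel \<partial>lborel)"
    unfolding d_def
    by (rule nn_integral_S_op_lborel_square_le) (use \<Omega> structural_assms_nu_ge[OF sa] \<nu>0 in auto)
  also have "\<dots> \<le> ennreal (d / \<nu>0) * (ennreal C * ennreal r1 * (ennreal C * (2 * ennreal r2) * ?H))"
    unfolding r1[symmetric] r2[symmetric] a_def
    using structural_assms_off_diagonal_bound[OF sa] C a
    by (intro mult_left_mono nn_integral_Kop_lborel_div_norm_le) (auto simp: a_def)
  also have "\<dots> = ennreal (d / \<nu>0 * (C * r1) * (C * (2 * r2))) * ?H"
    using C d \<nu>0 by (simp add: ennreal_mult' ennreal_mult'' ennreal_times_divide ennreal_divide_times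
        mult_ac r1_def r2_def flip: divide_ennreal)
  also have "d / \<nu>0 * (C * r1) * (C * (2 * r2)) = SK_constant \<rho> C \<nu>0 * d"
    by (simp add: SK_constant_def r1_def r2_def a_def power2_eq_square)
  also have "?H = (\<integral>\<^sup>+p. ennreal ((h p)\<^sup>2) \<partial>lborel)"
    by (intro nn_integral_lborel_pair(1)[symmetric]) (simp add: borel_prod[symmetric])
  finally show ?thesis unfolding d_def .
qed

lemma S_op_Kop_L2_bound:
  fixes h :: "R3 \<Rightarrow> R3 \<Rightarrow> real"
  assumes sa: "structural_assms \<nu> k \<rho> \<gamma> \<nu>0 \<nu>1 C" and \<Omega>: "open \<Omega>" "bounded \<Omega>" and h: "L2_on \<Omega> h"
  shows "L2_on \<Omega> (S_op \<Omega> \<nu> (Kop k h))"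
    and "(\<integral>p. (case p of (x, v) \<Rightarrow> (S_op \<Omega> \<nu> (Kop k h) x v)\<^sup>2) \<partial>lebesgue_on (\<Omega> \<times> UNIV))
      \<le> SK_constant \<rho> C \<nu>0 * diameter \<Omega> * (\<integral>p. (case p of (x, v) \<Rightarrow> (h x v)\<^sup>2) \<partial>lebesgue_on (\<Omega> \<times> UNIV))"
proof -
  define S :: "(R3 \<times> R3) set" where "S = \<Omega> \<times> UNIV"
  define G where "G = (\<lambda>(x, v). S_op \<Omega> \<nu> (Kop k h) x v)"
  define H where "H = (\<lambda>(x, v). h x v)"
  have S: "S \<in> sets borel" unfolding S_def using \<Omega> by (intro borel_open open_Times) auto
  have K: "0 \<le> SK_constant \<rho> C \<nu>0 * diameter \<Omega>" using sa diameter_ge_0[OF \<Omega>(2)]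
    by (intro mult_nonneg_nonneg SK_constant_nonneg) (auto simp: structural_assms_def)
  have G2: "(\<lambda>(x, v). (S_op \<Omega> \<nu> (Kop k h) x v)\<^sup>2) = (\<lambda>p. (G p)\<^sup>2)" by (auto simp: G_def)
  have H2: "(\<lambda>(x, v). (h x v)\<^sup>2) = (\<lambda>p. (H p)\<^sup>2)" by (auto simp: H_def)
  obtain h0 where [measurable]: "h0 \<in> borel_measurable (borel \<Otimes>\<^sub>M borel)"
    and h0: "\<And>p. p \<notin> S \<Longrightarrow> h0 p = 0" "AE p in lborel. p \<in> S \<longrightarrow> H p = h0 p"
    and G0: "AE p in lborel. p \<in> S \<longrightarrow> G p = S_op_lborel \<Omega> \<nu> (Kop_lborel (off_diagonal k) h0) p"
    using S_op_Kop_AE_eq_lborel[OF sa \<Omega>(1), of h] h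
    unfolding L2_on_def S_def G_def H_def by (auto simp: case_prod_beta)
  have "S_op_lborel \<Omega> \<nu> (Kop_lborel (off_diagonal k) h0) \<in> borel_measurable borel"
    using structural_assms_off_diagonal_borel[OF sa] structural_assms_nu_borel[OF sa] \<Omega>(1)
    by (simp add: borel_prod[symmetric])
  note transfer = lebesgue_on_square_integral_le_AE[OF S this G0 _ h0(2,1)
      nn_integral_S_op_lborel_Kop_lborel_le[OF sa \<Omega>] K]
  show "L2_on \<Omega> (S_op \<Omega> \<nu> (Kop k h))"
    using h transfer(1) borel_measurable_lebesgue_on_AE_eq[OF S \<open>_ \<in> borel_measurable borel\<close> G0]
    unfolding L2_on_def G2 H2 G_def[symmetric] S_def[symmetric] by simp
  show "(\<integral>p. (case p of (x, v) \<Rightarrow> (S_op \<Omega> \<nu> (Kop k h) x v)\<^sup>2) \<partial>lebesgue_on (\<Omega> \<times> UNIV))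
      \<le> SK_constant \<rho> C \<nu>0 * diameter \<Omega> * (\<integral>p. (case p of (x, v) \<Rightarrow> (h x v)\<^sup>2) \<partial>lebesgue_on (\<Omega> \<times> UNIV))"
    using h transfer(2) unfolding L2_on_def G2 H2 G_def[symmetric] S_def[symmetric] by simp
qed

lemma L2_norm_on_nonneg: "0 \<le> L2_norm_on \<Omega> h"
  unfolding L2_norm_on_def by (intro real_sqrt_ge_zero integral_nonneg) (auto split: prod.splits)

lemma L2_norm_on_square: "(L2_norm_on \<Omega> h)\<^sup>2 = (\<integral>p. (case p of (x, v) \<Rightarrow> (h x v)\<^sup>2) \<partial>lebesgue_on (\<Omega> \<times> UNIV))"
  unfolding L2_norm_on_def by (intro real_sqrt_pow2 integral_nonneg) (auto split: prod.splits)

theorem lemma1p3: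
  fixes \<nu> :: "R3 \<Rightarrow> real" and k :: "R3 \<Rightarrow> R3 \<Rightarrow> real"
    and \<rho> \<gamma> \<nu>0 \<nu>1 C :: real
  assumes "structural_assms \<nu> k \<rho> \<gamma> \<nu>0 \<nu>1 C"
  shows "\<exists>c>0. \<forall>\<Omega> h. bounded_C2_domain_pos_gauss_curv \<Omega> \<longrightarrow> L2_on \<Omega> h \<longrightarrow>
           L2_on \<Omega> (S_op \<Omega> \<nu> (Kop k h)) \<and>
           L2_norm_on \<Omega> (S_op \<Omega> \<nu> (Kop k h)) \<le> c * sqrt (diameter \<Omega>) * L2_norm_on \<Omega> h"
proof -
  define K where "K = SK_constant \<rho> C \<nu>0"
  have K: "0 \<le> K" using assms unfolding K_def structural_assms_def by (simp add: SK_constant_nonneg)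
  show ?thesis
  proof (intro exI[of _ "sqrt K + 1"] conjI allI impI)
    fix \<Omega> h assume "bounded_C2_domain_pos_gauss_curv \<Omega>" and h: "L2_on \<Omega> h"
    then have \<Omega>: "open \<Omega>" "bounded \<Omega>" by (auto simp: bounded_C2_domain_pos_gauss_curv_def)
    show "L2_on \<Omega> (S_op \<Omega> \<nu> (Kop k h))" by (rule S_op_Kop_L2_bound(1)[OF assms \<Omega> h])
    have "(L2_norm_on \<Omega> (S_op \<Omega> \<nu> (Kop k h)))\<^sup>2 \<le> K * diameter \<Omega> * (L2_norm_on \<Omega> h)\<^sup>2"
      unfolding L2_norm_on_square K_def by (rule S_op_Kop_L2_bound(2)[OF assms \<Omega> h])
    then have "sqrt ((L2_norm_on \<Omega> (S_op \<Omega> \<nu> (Kop k h)))\<^sup>2) \<le> sqrt (K * diameter \<Omega> * (L2_norm_on \<Omega> h)\<^sup>2)"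
      by (rule real_sqrt_le_mono)
    then have "L2_norm_on \<Omega> (S_op \<Omega> \<nu> (Kop k h)) \<le> sqrt K * sqrt (diameter \<Omega>) * L2_norm_on \<Omega> h"
      by (simp add: real_sqrt_mult L2_norm_on_nonneg)
    also have "\<dots> \<le> (sqrt K + 1) * sqrt (diameter \<Omega>) * L2_norm_on \<Omega> h"
      using diameter_ge_0[OF \<Omega>(2)] by (intro mult_right_mono) (auto simp: L2_norm_on_nonneg)
    finally show "L2_norm_on \<Omega> (S_op \<Omega> \<nu> (Kop k h)) \<le> (sqrt K + 1) * sqrt (diameter \<Omega>) * L2_norm_on \<Omega> h" .
  qed (use K in \<open>simp add: add_nonneg_pos\<close>)
qed

end
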